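(* Let $d\geq 1$ and let $G=(V,E)$ be a graph. Suppose that $E=E_1\cup E_2$ is a partition of $E$ into non-empty subsets with $r_d(E)=r_d(E_1)+r_d(E_2)$, and let $G_1,G_2$ be the subgraphs induced by $E_1,E_2$. Then $M_{d,G}=M_{d,G_1}\times M_{d,G_2}$ under the identification $\mathbb{C}^E=\mathbb{C}^{E_1}\times\mathbb{C}^{E_2}$.
   Context: $r_d$ denotes the rank function of the $d$-dimensional generic rigidity matroid on edge sets (the rank of the rows of the rigidity matrix $R(G,p)$ indexed by those edges, for generic $p$; the row of $uv$ has $p(u)-p(v)$ in the columns of $u$, $p(v)-p(u)$ in those of $v$). For a graph $G=(V,E)$ on $n$ vertices, the measurement map $m_{d,G}:\mathbb{C}^{nd}\to\mathbb{C}^E$ sends $p$ to $(\sum_{k=1}^d(p(u)_k-p(v)_k)^2)_{uv\in E}$, and the measurement variety $M_{d,G}$ is the Zariski closure of $m_{d,G}(\mathbb{C}^{nd})$ in $\mathbb{C}^E$. The subgraph induced by an edge set consists of those edges and their end-vertices. *)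

theory Defs
  imports "HOL-Analysis.Analysis"
begin

(* Graphs: vertex set V :: 'v set, edge set E :: 'v set set of 2-element subsets of V.
   Configurations in dimension d: p :: 'v => nat => _, coordinate k < d of vertex v is p v k. *)

definition ends :: "'v set \<Rightarrow> 'v \<times> 'v" where
  "ends e = (SOME (u, v). u \<noteq> v \<and> e = {u, v})"

(* Row of the rigidity matrix R(G,p) indexed by the edge e = uv; columns are indexed by
   pairs (w,k), w a vertex, k < d a coordinate. *)
definition rig_row :: "nat \<Rightarrow> ('v \<Rightarrow> nat \<Rightarrow> real) \<Rightarrow> 'v set \<Rightarrow> ('v \<times> nat \<Rightarrow> real)" where
  "rig_row d p e = (\<lambda>(w, k). if k < d then
      (case ends e of (u, v) \<Rightarrow>
         if w = u then p u k - p v k else if w = v then p v k - p u k else 0)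
     else 0)"

definition rows_indep :: "nat \<Rightarrow> ('v \<Rightarrow> nat \<Rightarrow> real) \<Rightarrow> 'v set set \<Rightarrow> bool" where
  "rows_indep d p F \<longleftrightarrow>
     (\<forall>c :: 'v set \<Rightarrow> real. (\<lambda>x. \<Sum>e\<in>F. c e * rig_row d p e x) = (\<lambda>_. 0) \<longrightarrow> (\<forall>e\<in>F. c e = 0))"

definition rows_rank :: "nat \<Rightarrow> ('v \<Rightarrow> nat \<Rightarrow> real) \<Rightarrow> 'v set set \<Rightarrow> nat" where
  "rows_rank d p F = Max {card F' | F'. F' \<subseteq> F \<and> rows_indep d p F'}"

(* generic rank r_d(F): the rank attained at a generic configuration, i.e. the maximum
   of the rank over all (real) configurations *)
definition rig_rank :: "nat \<Rightarrow> 'v set set \<Rightarrow> nat" where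
  "rig_rank d F = Max {rows_rank d p F | p. True}"

inductive_set polyfun :: "'i set \<Rightarrow> (('i \<Rightarrow> complex) \<Rightarrow> complex) set" for X where
  pf_const: "(\<lambda>_. c) \<in> polyfun X"
| pf_var: "i \<in> X \<Longrightarrow> (\<lambda>x. x i) \<in> polyfun X"
| pf_add: "f \<in> polyfun X \<Longrightarrow> g \<in> polyfun X \<Longrightarrow> (\<lambda>x. f x + g x) \<in> polyfun X"
| pf_mult: "f \<in> polyfun X \<Longrightarrow> g \<in> polyfun X \<Longrightarrow> (\<lambda>x. f x * g x) \<in> polyfun X"

(* C^X, represented as functions vanishing outside X *)
definition cspace :: "'i set \<Rightarrow> ('i \<Rightarrow> complex) set" where
  "cspace X = {x. \<forall>i. i \<notin> X \<longrightarrow> x i = 0}"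

definition zariski_closure :: "'i set \<Rightarrow> ('i \<Rightarrow> complex) set \<Rightarrow> ('i \<Rightarrow> complex) set" where
  "zariski_closure X S =
     {x \<in> cspace X. \<forall>f \<in> polyfun X. (\<forall>y\<in>S. f y = 0) \<longrightarrow> f x = 0}"

definition config_space :: "nat \<Rightarrow> 'v set \<Rightarrow> ('v \<Rightarrow> nat \<Rightarrow> complex) set" where
  "config_space d V = {p. \<forall>v k. v \<notin> V \<or> d \<le> k \<longrightarrow> p v k = 0}"

definition meas_map :: "nat \<Rightarrow> 'v set set \<Rightarrow> ('v \<Rightarrow> nat \<Rightarrow> complex) \<Rightarrow> ('v set \<Rightarrow> complex)" where
  "meas_map d E p = (\<lambda>e. if e \<in> E then
      (case ends e of (u, v) \<Rightarrow> \<Sum>k<d. (p u k - p v k)^2) else 0)"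

definition meas_variety :: "nat \<Rightarrow> 'v set \<Rightarrow> 'v set set \<Rightarrow> ('v set \<Rightarrow> complex) set" where
  "meas_variety d V E = zariski_closure E (meas_map d E ` config_space d V)"

definition restrict_to :: "'i set \<Rightarrow> ('i \<Rightarrow> complex) \<Rightarrow> ('i \<Rightarrow> complex)" where
  "restrict_to X x = (\<lambda>i. if i \<in> X then x i else 0)"

end

theory Submission
  imports Defs "HOL-Computational_Algebra.Polynomial"
begin

(* The inclusion of M_{d,G} in the product is Zariski continuity of the coordinate
   projections.  Conversely, closures may be taken in each factor separately, so it suffices
   that every polynomial vanishing on M_{d,G} vanishes at (m_{d,G1}(p), m_{d,G2}(q)) for all
   complex p, q; as a polynomial vanishing on a product of infinite sets is zero, real p, q in
   a small box around one configuration p0 suffice.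
   Take p0 generic and a set B of edges whose rigidity rows form a basis at p0; by rank
   additivity the parts of B in E1 and in E2 are bases for E1 and E2.  Near p0 the squared
   lengths of the edges of B are locally surjective (a contraction argument), so some s has
   the squared lengths of p on the part of B in E1 and those of q on the part in E2.  Finally
     |s_u - s_v|^2 - |p_u - p_v|^2 = 2 <m_u - m_v, (s - p)_u - (s - p)_v>,  m = (s + p)/2,
   and the part of B in E1 still gives a basis of the rows of E1 at m, so s and p have the
   same squared lengths on all of E1; likewise s and q on E2. *)

section \<open>Polynomial functions\<close>

lemma polyfun_cong: "f \<in> polyfun X \<Longrightarrow> (\<And>i. i \<in> X \<Longrightarrow> x i = y i) \<Longrightarrow> f x = f y"
  by (induction f rule: polyfun.induct) auto

lemma polyfun_compose:
  "f \<in> polyfun X \<Longrightarrow> (\<And>i. i \<in> X \<Longrightarrow> (\<lambda>y. \<phi> y i) \<in> polyfun Y) \<Longrightarrow> (\<lambda>y. f (\<phi> y)) \<in> polyfun Y"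
  by (induction f rule: polyfun.induct) (auto intro: polyfun.intros)

lemma polyfun_diff: "f \<in> polyfun X \<Longrightarrow> g \<in> polyfun X \<Longrightarrow> (\<lambda>x. f x - g x) \<in> polyfun X"
proof -
  assume "f \<in> polyfun X" "g \<in> polyfun X"
  then have "(\<lambda>x. f x + (\<lambda>_. - 1) x * g x) \<in> polyfun X"
    by (intro polyfun.intros)
  then show ?thesis by simp
qed

lemma polyfun_power2: "f \<in> polyfun X \<Longrightarrow> (\<lambda>x. (f x)\<^sup>2) \<in> polyfun X"
  using polyfun.pf_mult[of f X f] by (simp add: power2_eq_square)

lemma polyfun_sum:
  "finite K \<Longrightarrow> (\<And>k. k \<in> K \<Longrightarrow> f k \<in> polyfun X) \<Longrightarrow> (\<lambda>x. \<Sum>k\<in>K. f k x) \<in> polyfun X"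
  by (induction K rule: finite_induct) (auto intro: polyfun.intros)

lemma polyfun_fix_var: "f \<in> polyfun X \<Longrightarrow> (\<lambda>x. f (x(i := c))) \<in> polyfun (X - {i})"
proof (induction f rule: polyfun.induct)
  case (pf_var j)
  then show ?case by (cases "j = i") (auto intro: polyfun.intros)
qed (auto intro: polyfun.intros)

lemma polyfun_univariate: "f \<in> polyfun X \<Longrightarrow> \<exists>P. \<forall>t. f (x(i := t)) = poly P t"
proof (induction f rule: polyfun.induct)
  case (pf_const c)
  show ?case by (rule exI[of _ "[:c:]"]) simp
next
  case (pf_var j)
  show ?case by (rule exI[of _ "if j = i then [:0, 1:] else [:x j:]"]) simp
next
  case (pf_add f g)
  then obtain P Q where "\<forall>t. f (x(i := t)) = poly P t" "\<forall>t. g (x(i := t)) = poly Q t" by blast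
  then show ?case by (intro exI[of _ "P + Q"]) (metis poly_add)
next
  case (pf_mult f g)
  then obtain P Q where "\<forall>t. f (x(i := t)) = poly P t" "\<forall>t. g (x(i := t)) = poly Q t" by blast
  then show ?case by (intro exI[of _ "P * Q"]) (metis poly_mult)
qed

lemma polyfun_zero_if_zero_on_grid:
  assumes "finite X" "f \<in> polyfun X" "\<And>i. i \<in> X \<Longrightarrow> infinite (S i)"
    and "\<And>x. (\<And>i. i \<in> X \<Longrightarrow> x i \<in> S i) \<Longrightarrow> f x = 0"
  shows "f y = 0"
  using assms
proof (induction X arbitrary: f rule: finite_induct)
  case empty
  then show ?case by blast
next
  case (insert i X)
  have fixed: "(\<lambda>x. f (x(i := y i))) \<in> polyfun X"
    using polyfun_fix_var[OF insert.prems(1), of i "y i"] insert.hyps(2) by (simp add: fun_upd_def)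
  have zero: "f (x(i := t)) = 0" if x: "\<And>j. j \<in> X \<Longrightarrow> x j \<in> S j" for x t
  proof -
    \<comment> \<open>In the last variable, f is a univariate polynomial with infinitely many roots.\<close>
    obtain P where P: "\<forall>t. f (x(i := t)) = poly P t"
      using polyfun_univariate[OF insert.prems(1)] by blast
    have "S i \<subseteq> {t. poly P t = 0}"
    proof
      fix t assume "t \<in> S i"
      then have "f (x(i := t)) = 0"
        by (intro insert.prems(3)) (use x in auto)
      then show "t \<in> {t. poly P t = 0}" using P by simp
    qed
    then have "P = 0"
      using insert.prems(2) poly_roots_finite finite_subset by blast
    then show ?thesis using P by simp
  qed
  have "(\<lambda>x. f (x(i := y i))) y = 0"
    by (rule insert.IH[OF fixed]) (use insert.prems(2) zero in \<open>auto simp del: fun_upd_apply\<close>)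
  then show ?case by simp
qed

section \<open>Zariski closures and gluing\<close>

lemma zariski_closureD:
  "x \<in> zariski_closure X S \<Longrightarrow> f \<in> polyfun X \<Longrightarrow> (\<And>y. y \<in> S \<Longrightarrow> f y = 0) \<Longrightarrow> f x = 0"
  unfolding zariski_closure_def by blast

lemma zariski_closureI:
  "x \<in> cspace X \<Longrightarrow> (\<And>f. f \<in> polyfun X \<Longrightarrow> \<forall>y\<in>S. f y = 0 \<Longrightarrow> f x = 0) \<Longrightarrow> x \<in> zariski_closure X S"
  unfolding zariski_closure_def by blast

lemma zariski_closure_restrict_to:
  assumes "F \<subseteq> X" and "restrict_to F ` S \<subseteq> T" and "x \<in> zariski_closure X S"
  shows "restrict_to F x \<in> zariski_closure F T"
proof (rule zariski_closureI)
  show "restrict_to F x \<in> cspace F" by (simp add: cspace_def restrict_to_def)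
  fix f assume f: "f \<in> polyfun F" and zero: "\<forall>y\<in>T. f y = 0"
  have "(\<lambda>y. f (restrict_to F y)) \<in> polyfun X"
  proof (rule polyfun_compose[OF f])
    fix i assume "i \<in> F"
    then show "(\<lambda>y. restrict_to F y i) \<in> polyfun X"
      using assms(1) by (auto simp: restrict_to_def intro: polyfun.pf_var)
  qed
  moreover have "f (restrict_to F y) = 0" if "y \<in> S" for y
    using assms(2) zero that by blast
  ultimately show "f (restrict_to F x) = 0"
    using zariski_closureD[OF assms(3)] by blast
qed

definition glue :: "'i set \<Rightarrow> ('i \<Rightarrow> 'a) \<Rightarrow> ('i \<Rightarrow> 'a) \<Rightarrow> 'i \<Rightarrow> 'a" where
  "glue X a b = (\<lambda>i. if i \<in> X then a i else b i)"

lemma polyfun_glue_compose: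
  assumes "f \<in> polyfun (X \<union> Y)"
    and "\<And>i. i \<in> X \<Longrightarrow> (\<lambda>Q. a Q i) \<in> polyfun Z" "\<And>i. i \<in> Y \<Longrightarrow> (\<lambda>Q. b Q i) \<in> polyfun Z"
  shows "(\<lambda>Q. f (glue X (a Q) (b Q))) \<in> polyfun Z"
proof (rule polyfun_compose[OF assms(1)])
  fix i assume "i \<in> X \<union> Y"
  then show "(\<lambda>Q. glue X (a Q) (b Q) i) \<in> polyfun Z"
    using assms(2,3) by (cases "i \<in> X") (simp_all add: glue_def)
qed

lemma zariski_closure_glue:
  assumes f: "f \<in> polyfun (X \<union> Y)" and zero: "\<And>a b. a \<in> S \<Longrightarrow> b \<in> T \<Longrightarrow> f (glue X a b) = 0"
    and a: "a \<in> zariski_closure X S" and b: "b \<in> zariski_closure Y T"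
  shows "f (glue X a b) = 0"
proof -
  have left: "(\<lambda>a. f (glue X a b')) \<in> polyfun X" for b'
    by (rule polyfun_glue_compose[OF f]) (simp_all add: polyfun.intros)
  have right: "(\<lambda>b. f (glue X a b)) \<in> polyfun Y"
    by (rule polyfun_glue_compose[OF f]) (simp_all add: polyfun.intros)
  have "f (glue X a b') = 0" if "b' \<in> T" for b'
    by (rule zariski_closureD[OF a left]) (use zero that in blast)
  then show ?thesis
    by (rule zariski_closureD[OF b right])
qed

definition complete_edges :: "'v set \<Rightarrow> 'v set set" where
  "complete_edges V = {{u, v} | u v. u \<in> V \<and> v \<in> V \<and> u \<noteq> v}"

lemma complete_edgesE:
  assumes "e \<in> complete_edges V"
  obtains u v where "ends e = (u, v)" "e = {u, v}" "u \<in> V" "v \<in> V" "u \<noteq> v"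
proof -
  obtain a b where ab: "e = {a, b}" "a \<in> V" "b \<in> V" "a \<noteq> b"
    using assms unfolding complete_edges_def by blast
  have "ends e = (SOME uv. fst uv \<noteq> snd uv \<and> e = {fst uv, snd uv})"
    unfolding ends_def split_beta' ..
  moreover have "fst (a, b) \<noteq> snd (a, b) \<and> e = {fst (a, b), snd (a, b)}"
    using ab by simp
  ultimately have uv: "fst (ends e) \<noteq> snd (ends e) \<and> e = {fst (ends e), snd (ends e)}"
    by (metis (mono_tags, lifting) someI)
  moreover have "e \<subseteq> V"
    using ab by simp
  ultimately have "fst (ends e) \<in> V" "snd (ends e) \<in> V"
    by auto
  with uv show thesis
    by (intro that[of "fst (ends e)" "snd (ends e)"]) simp_all
qed

lemma finite_complete_edges: "finite V \<Longrightarrow> finite (complete_edges V)"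
  unfolding complete_edges_def by (rule finite_subset[of _ "Pow V"]) auto

lemma complete_edges_Union: "F \<subseteq> complete_edges V \<Longrightarrow> F \<subseteq> complete_edges (\<Union>F)"
  unfolding complete_edges_def by blast

definition edge_inner ::
  "nat \<Rightarrow> 'v set \<Rightarrow> ('v \<Rightarrow> nat \<Rightarrow> real) \<Rightarrow> ('v \<Rightarrow> nat \<Rightarrow> real) \<Rightarrow> real" where
  "edge_inner d e x y = (case ends e of (u, v) \<Rightarrow> \<Sum>k<d. (x u k - x v k) * (y u k - y v k))"

lemma edge_inner_commute: "edge_inner d e x y = edge_inner d e y x"
  unfolding edge_inner_def by (cases "ends e") (simp add: mult.commute)

lemma edge_inner_add_left:
  "edge_inner d e (\<lambda>v k. x v k + y v k) w = edge_inner d e x w + edge_inner d e y w"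
  unfolding edge_inner_def by (cases "ends e") (simp add: sum.distrib[symmetric] algebra_simps)

lemma edge_inner_diff_left:
  "edge_inner d e (\<lambda>v k. x v k - y v k) w = edge_inner d e x w - edge_inner d e y w"
  unfolding edge_inner_def by (cases "ends e") (simp add: sum_subtractf[symmetric] algebra_simps)

lemma edge_inner_scale_left: "edge_inner d e (\<lambda>v k. a * x v k) w = a * edge_inner d e x w"
  unfolding edge_inner_def by (cases "ends e") (simp add: sum_distrib_left algebra_simps)

lemma edge_inner_add_right:
  "edge_inner d e w (\<lambda>v k. x v k + y v k) = edge_inner d e w x + edge_inner d e w y"
  by (metis edge_inner_commute edge_inner_add_left)

lemma edge_inner_diff_right:
  "edge_inner d e w (\<lambda>v k. x v k - y v k) = edge_inner d e w x - edge_inner d e w y"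
  by (metis edge_inner_commute edge_inner_diff_left)

lemma edge_inner_scale_right: "edge_inner d e w (\<lambda>v k. a * x v k) = a * edge_inner d e w x"
  by (metis edge_inner_commute edge_inner_scale_left)

lemma edge_inner_zero_right: "edge_inner d e x (\<lambda>v k. 0) = 0"
  unfolding edge_inner_def by (cases "ends e") simp

lemma edge_inner_sum_right:
  "edge_inner d e w (\<lambda>v k. \<Sum>j\<in>J. z j * W j v k) = (\<Sum>j\<in>J. z j * edge_inner d e w (W j))"
proof (cases "ends e")
  case (Pair u v)
  have "edge_inner d e w (\<lambda>v k. \<Sum>j\<in>J. z j * W j v k)
      = (\<Sum>k<d. \<Sum>j\<in>J. z j * ((w u k - w v k) * (W j u k - W j v k)))"
    unfolding edge_inner_def Pair
    by (simp add: sum_subtractf[symmetric] sum_distrib_left algebra_simps)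
  also have "\<dots> = (\<Sum>j\<in>J. z j * edge_inner d e w (W j))"
    unfolding edge_inner_def Pair by (subst sum.swap) (simp add: sum_distrib_left)
  finally show ?thesis .
qed

lemma edge_inner_self_diff:
  "edge_inner d e x x - edge_inner d e y y
     = edge_inner d e (\<lambda>v k. x v k - y v k) (\<lambda>v k. x v k + y v k)"
  by (simp add: edge_inner_diff_left edge_inner_add_right edge_inner_commute[of d e y x])

lemma edge_inner_self_add:
  "edge_inner d e (\<lambda>v k. c v k + w v k) (\<lambda>v k. c v k + w v k)
     = edge_inner d e c c + 2 * edge_inner d e c w + edge_inner d e w w"
  by (simp add: edge_inner_add_left edge_inner_add_right edge_inner_commute[of d e w c])

definition config_norm :: "'v set \<Rightarrow> nat \<Rightarrow> ('v \<Rightarrow> nat \<Rightarrow> real) \<Rightarrow> real" where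
  "config_norm V d x = (\<Sum>(v, k)\<in>V \<times> {..<d}. \<bar>x v k\<bar>)"

lemma config_norm_nonneg: "0 \<le> config_norm V d x"
  unfolding config_norm_def by (simp add: sum_nonneg split_beta)

lemma config_norm_add: "config_norm V d (\<lambda>v k. x v k + y v k) \<le> config_norm V d x + config_norm V d y"
  unfolding config_norm_def sum.distrib[symmetric] by (rule sum_mono) (simp add: split_beta abs_triangle_ineq)

lemma config_norm_scale: "config_norm V d (\<lambda>v k. a * x v k) = \<bar>a\<bar> * config_norm V d x"
  unfolding config_norm_def by (simp add: sum_distrib_left abs_mult split_beta)

lemma config_norm_sum:
  "config_norm V d (\<lambda>v k. \<Sum>j\<in>J. z j * W j v k) \<le> (\<Sum>j\<in>J. \<bar>z j\<bar> * config_norm V d (W j))"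
proof -
  have "config_norm V d (\<lambda>v k. \<Sum>j\<in>J. z j * W j v k)
      \<le> (\<Sum>(v, k)\<in>V \<times> {..<d}. \<Sum>j\<in>J. \<bar>z j\<bar> * \<bar>W j v k\<bar>)"
    unfolding config_norm_def split_beta
    by (rule sum_mono, rule order_trans[OF sum_abs]) (simp add: abs_mult)
  also have "\<dots> = (\<Sum>j\<in>J. \<bar>z j\<bar> * config_norm V d (W j))"
    unfolding config_norm_def sum_distrib_left split_beta by (rule sum.swap)
  finally show ?thesis .
qed

lemma config_norm_le_box:
  assumes "\<And>v k. v \<in> V \<Longrightarrow> k < d \<Longrightarrow> \<bar>x v k\<bar> \<le> t"
  shows "config_norm V d x \<le> real (card (V \<times> {..<d})) * t"
  using sum_mono[of "V \<times> {..<d}" "\<lambda>(v, k). \<bar>x v k\<bar>" "\<lambda>_. t"] assms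
  unfolding config_norm_def by auto

lemma config_norm_le_add:
  assumes "\<And>v k. \<bar>x v k\<bar> \<le> \<bar>y v k\<bar> + \<bar>z v k\<bar>"
  shows "config_norm V d x \<le> config_norm V d y + config_norm V d z"
  unfolding config_norm_def sum.distrib[symmetric] by (rule sum_mono) (simp add: split_beta assms)

lemma config_norm_midpoint:
  "config_norm V d (\<lambda>v k. (s v k + q v k) / 2 - p\<^sub>0 v k)
     \<le> (config_norm V d (\<lambda>v k. s v k - p\<^sub>0 v k) + config_norm V d (\<lambda>v k. q v k - p\<^sub>0 v k)) / 2"
proof -
  have "config_norm V d (\<lambda>v k. (s v k + q v k) / 2 - p\<^sub>0 v k)
      \<le> config_norm V d (\<lambda>v k. 1 / 2 * (s v k - p\<^sub>0 v k)) + config_norm V d (\<lambda>v k. 1 / 2 * (q v k - p\<^sub>0 v k))"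
    by (rule config_norm_le_add) (simp add: abs_mult[symmetric] abs_triangle_ineq[THEN order_trans] field_simps)
  then show ?thesis unfolding config_norm_scale by simp
qed

lemma edge_diff_le_config_norm:
  assumes "u \<in> V" "w \<in> V" "u \<noteq> w" "finite V"
  shows "(\<Sum>k<d. \<bar>x u k - x w k\<bar>) \<le> config_norm V d x"
proof -
  have "(\<Sum>k<d. \<bar>x u k - x w k\<bar>) \<le> (\<Sum>k<d. \<bar>x u k\<bar> + \<bar>x w k\<bar>)"
    by (rule sum_mono) (simp add: abs_triangle_ineq4)
  also have "\<dots> = (\<Sum>(a, k)\<in>{u, w} \<times> {..<d}. \<bar>x a k\<bar>)"
    using assms by (simp add: sum.cartesian_product[symmetric] sum.distrib)
  also have "\<dots> \<le> config_norm V d x"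
    unfolding config_norm_def using assms by (intro sum_mono2) auto
  finally show ?thesis .
qed

lemma edge_inner_bound:
  assumes "e \<in> complete_edges V" "finite V"
  shows "\<bar>edge_inner d e x y\<bar> \<le> config_norm V d x * config_norm V d y"
proof -
  obtain u w where e: "ends e = (u, w)" "u \<in> V" "w \<in> V" "u \<noteq> w"
    using assms(1) by (rule complete_edgesE)
  have "\<bar>edge_inner d e x y\<bar> \<le> (\<Sum>k<d. \<bar>x u k - x w k\<bar> * \<bar>y u k - y w k\<bar>)"
    unfolding edge_inner_def e by (simp add: order_trans[OF sum_abs] abs_mult)
  also have "\<dots> \<le> (\<Sum>k<d. \<bar>x u k - x w k\<bar> * (\<Sum>j<d. \<bar>y u j - y w j\<bar>))"
    by (intro sum_mono mult_left_mono member_le_sum) auto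
  also have "\<dots> = (\<Sum>k<d. \<bar>x u k - x w k\<bar>) * (\<Sum>k<d. \<bar>y u k - y w k\<bar>)"
    by (simp add: sum_distrib_right)
  also have "\<dots> \<le> config_norm V d x * config_norm V d y"
    using e assms(2)
    by (intro mult_mono edge_diff_le_config_norm config_norm_nonneg) (auto intro: sum_nonneg)
  finally show ?thesis .
qed

section \<open>Independence of rigidity rows\<close>

definition indep_functions :: "'e set \<Rightarrow> ('e \<Rightarrow> 'a \<Rightarrow> real) \<Rightarrow> bool" where
  "indep_functions F \<phi> \<longleftrightarrow> (\<forall>c. (\<lambda>x. \<Sum>e\<in>F. c e * \<phi> e x) = (\<lambda>_. 0) \<longrightarrow> (\<forall>e\<in>F. c e = 0))"

lemma rows_indep_eq_indep_functions: "rows_indep d x F = indep_functions F (rig_row d x)"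
  unfolding rows_indep_def indep_functions_def ..

lemma indep_functions_subset:
  assumes "indep_functions F \<phi>" "G \<subseteq> F" "finite F"
  shows "indep_functions G \<phi>"
  unfolding indep_functions_def
proof (intro allI impI)
  fix c assume c: "(\<lambda>x. \<Sum>e\<in>G. c e * \<phi> e x) = (\<lambda>_. 0)"
  let ?c = "\<lambda>e. if e \<in> G then c e else 0"
  have "(\<lambda>x. \<Sum>e\<in>F. ?c e * \<phi> e x) = (\<lambda>x. \<Sum>e\<in>G. c e * \<phi> e x)"
    using assms(2,3) by (intro ext, subst sum.mono_neutral_right[of F G]) auto
  then have zero: "\<forall>e\<in>F. ?c e = 0"
    using assms(1)[unfolded indep_functions_def, rule_format, of ?c] c by simp
  show "\<forall>e\<in>G. c e = 0"
  proof
    fix e assume "e \<in> G"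
    with zero assms(2) have "?c e = 0" by blast
    with \<open>e \<in> G\<close> show "c e = 0" by simp
  qed
qed

lemma indep_functions_insert_span:
  assumes "finite B" "e \<notin> B" "indep_functions B \<phi>" "\<not> indep_functions (insert e B) \<phi>"
  shows "\<exists>a. \<forall>x. \<phi> e x = (\<Sum>b\<in>B. a b * \<phi> b x)"
proof -
  obtain c where c: "\<And>x. c e * \<phi> e x + (\<Sum>b\<in>B. c b * \<phi> b x) = 0"
    and nonzero: "\<exists>b\<in>insert e B. c b \<noteq> 0"
    using assms(4) assms(1,2) unfolding indep_functions_def by (auto simp: fun_eq_iff)
  have "c e \<noteq> 0"
  proof
    assume "c e = 0"
    then have "(\<lambda>x. \<Sum>b\<in>B. c b * \<phi> b x) = (\<lambda>_. 0)" using c by simp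
    then show False
      using assms(3) nonzero \<open>c e = 0\<close> unfolding indep_functions_def by blast
  qed
  then have "\<phi> e x = (\<Sum>b\<in>B. (- c b / c e) * \<phi> b x)" for x
    using c[of x] by (simp add: field_simps sum_divide_distrib[symmetric] sum_negf)
  then show ?thesis by (intro exI[of _ "\<lambda>b. - c b / c e"]) blast
qed

lemma edge_inner_eq_rig_row:
  assumes "e \<in> complete_edges V" "finite V"
  shows "edge_inner d e x w = (\<Sum>i\<in>V \<times> {..<d}. rig_row d x e i * w (fst i) (snd i))"
proof -
  obtain u v where e: "ends e = (u, v)" "u \<in> V" "v \<in> V" "u \<noteq> v"
    using assms(1) by (rule complete_edgesE)
  have "(\<Sum>a\<in>V. rig_row d x e (a, k) * w a k) = (x u k - x v k) * w u k + (x v k - x u k) * w v k"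
    if "k < d" for k
  proof -
    have "(\<Sum>a\<in>V. rig_row d x e (a, k) * w a k)
        = (\<Sum>a\<in>V. (if a = u then (x u k - x v k) * w u k else 0)
                   + (if a = v then (x v k - x u k) * w v k else 0))"
      using e that by (intro sum.cong) (auto simp: rig_row_def)
    then show ?thesis using e assms(2) by (simp add: sum.distrib)
  qed
  then have "(\<Sum>k<d. \<Sum>a\<in>V. rig_row d x e (a, k) * w a k)
      = (\<Sum>k<d. (x u k - x v k) * w u k + (x v k - x u k) * w v k)"
    by (intro sum.cong) auto
  moreover have "(\<Sum>i\<in>V \<times> {..<d}. rig_row d x e i * w (fst i) (snd i))
      = (\<Sum>k<d. \<Sum>a\<in>V. rig_row d x e (a, k) * w a k)"
    by (simp only: sum.cartesian_product' fst_conv snd_conv) (rule sum.swap)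
  ultimately have "(\<Sum>i\<in>V \<times> {..<d}. rig_row d x e i * w (fst i) (snd i))
      = (\<Sum>k<d. (x u k - x v k) * w u k + (x v k - x u k) * w v k)"
    by simp
  also have "\<dots> = edge_inner d e x w"
    unfolding edge_inner_def e case_prod_conv by (intro sum.cong) (auto simp: algebra_simps)
  finally show ?thesis ..
qed

lemma rig_row_outside:
  assumes "e \<in> complete_edges V" "\<not> (a \<in> V \<and> k < d)"
  shows "rig_row d x e (a, k) = 0"
  using assms by (elim complete_edgesE) (auto simp: rig_row_def)

lemma rig_row_combination_zero_iff:
  assumes "F \<subseteq> complete_edges V" "finite V"
  shows "(\<lambda>i. \<Sum>e\<in>F. c e * rig_row d x e i) = (\<lambda>_. 0)
     \<longleftrightarrow> (\<lambda>w. \<Sum>e\<in>F. c e * edge_inner d e x w) = (\<lambda>_. 0)"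
proof
  assume rows: "(\<lambda>i. \<Sum>e\<in>F. c e * rig_row d x e i) = (\<lambda>_. 0)"
  have "(\<Sum>e\<in>F. c e * edge_inner d e x w) = 0" for w
  proof -
    have "(\<Sum>e\<in>F. c e * edge_inner d e x w)
        = (\<Sum>e\<in>F. \<Sum>i\<in>V \<times> {..<d}. c e * rig_row d x e i * w (fst i) (snd i))"
      using assms by (intro sum.cong) (auto simp: edge_inner_eq_rig_row sum_distrib_left mult.assoc)
    also have "\<dots> = (\<Sum>i\<in>V \<times> {..<d}. (\<Sum>e\<in>F. c e * rig_row d x e i) * w (fst i) (snd i))"
      by (subst sum.swap) (simp add: sum_distrib_right)
    finally show ?thesis using fun_cong[OF rows] by simp
  qed
  then show "(\<lambda>w. \<Sum>e\<in>F. c e * edge_inner d e x w) = (\<lambda>_. 0)"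
    by (simp add: fun_eq_iff)
next
  assume forms: "(\<lambda>w. \<Sum>e\<in>F. c e * edge_inner d e x w) = (\<lambda>_. 0)"
  show "(\<lambda>i. \<Sum>e\<in>F. c e * rig_row d x e i) = (\<lambda>_. 0)"
  proof
    fix i :: "'a \<times> nat"
    obtain a k where i: "i = (a, k)" by fastforce
    show "(\<Sum>e\<in>F. c e * rig_row d x e i) = 0"
    proof (cases "a \<in> V \<and> k < d")
      case True
      let ?w = "\<lambda>b j. if (b, j) = (a, k) then 1 else 0 :: real"
      have "edge_inner d e x ?w = rig_row d x e (a, k)" if "e \<in> F" for e
        using that assms True by (subst edge_inner_eq_rig_row[of _ V]) (auto simp: if_distrib cong: if_cong)
      then show ?thesis using fun_cong[OF forms, of ?w] i by simp
    next
      case False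
      then have "rig_row d x e (a, k) = 0" if "e \<in> F" for e
        using rig_row_outside[of e V a k d x] assms(1) that by blast
      then show ?thesis by (simp add: i)
    qed
  qed
qed

lemma rows_indep_iff_edge_inner:
  assumes "F \<subseteq> complete_edges V" "finite V"
  shows "rows_indep d x F \<longleftrightarrow> indep_functions F (\<lambda>e. edge_inner d e x)"
  unfolding rows_indep_eq_indep_functions indep_functions_def
  using rig_row_combination_zero_iff[OF assms] by simp

lemma rows_indep_empty: "rows_indep d p {}"
  unfolding rows_indep_def by simp

lemma finite_indep_cards: "finite F \<Longrightarrow> finite {card B | B. B \<subseteq> F \<and> rows_indep d p B}"
  by (rule finite_subset[of _ "card ` Pow F"]) auto

lemma rows_rank_attained:
  assumes "finite F"
  obtains B where "B \<subseteq> F" "rows_indep d p B" "card B = rows_rank d p F"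
proof -
  have "rows_rank d p F \<in> {card B | B. B \<subseteq> F \<and> rows_indep d p B}"
    unfolding rows_rank_def
    by (rule Max_in[OF finite_indep_cards[OF assms]]) (use rows_indep_empty in blast)
  then obtain B where "rows_rank d p F = card B" "B \<subseteq> F" "rows_indep d p B"
    by blast
  then show thesis using that by simp
qed

lemma card_le_rows_rank:
  assumes "finite F" "B \<subseteq> F" "rows_indep d p B"
  shows "card B \<le> rows_rank d p F"
  unfolding rows_rank_def using assms(2,3) by (intro Max_ge[OF finite_indep_cards[OF assms(1)]]) blast

lemma rows_rank_le_card: "finite F \<Longrightarrow> rows_rank d p F \<le> card F"
  by (metis card_mono rows_rank_attained)

lemma finite_rows_ranks: "finite F \<Longrightarrow> finite {rows_rank d p F | p. True}"
  by (rule finite_subset[of _ "{..card F}"]) (auto simp: rows_rank_le_card)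

lemma rig_rank_attained: "finite F \<Longrightarrow> \<exists>p. rows_rank d p F = rig_rank d F"
proof -
  assume "finite F"
  then have "rig_rank d F \<in> {rows_rank d p F | p. True}"
    unfolding rig_rank_def by (intro Max_in finite_rows_ranks) auto
  then show ?thesis by auto
qed

lemma card_le_rig_rank:
  assumes "finite F" "B \<subseteq> F" "rows_indep d p B"
  shows "card B \<le> rig_rank d F"
proof -
  have "rows_rank d p F \<le> rig_rank d F"
    unfolding rig_rank_def using finite_rows_ranks[OF assms(1)] by (intro Max_ge) auto
  then show ?thesis using card_le_rows_rank[OF assms] by linarith
qed

lemma rows_indep_subset: "rows_indep d p F \<Longrightarrow> G \<subseteq> F \<Longrightarrow> finite F \<Longrightarrow> rows_indep d p G"
  unfolding rows_indep_eq_indep_functions by (rule indep_functions_subset)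

lemma rank_additive_basis:
  assumes "finite E" "E1 \<union> E2 = E" "E1 \<inter> E2 = {}"
    and "rig_rank d E = rig_rank d E1 + rig_rank d E2"
  obtains p\<^sub>0 B where "B \<subseteq> E" "rows_indep d p\<^sub>0 B"
    "card (B \<inter> E1) = rig_rank d E1" "card (B \<inter> E2) = rig_rank d E2"
proof -
  obtain p\<^sub>0 where p\<^sub>0: "rows_rank d p\<^sub>0 E = rig_rank d E"
    using rig_rank_attained[OF assms(1)] by blast
  obtain B where B: "B \<subseteq> E" "rows_indep d p\<^sub>0 B" "card B = rig_rank d E"
    using rows_rank_attained[OF assms(1)] p\<^sub>0 by metis
  have fin: "finite B" "finite E1" "finite E2"
    using B(1) assms(1,2) finite_subset by auto
  have "B = (B \<inter> E1) \<union> (B \<inter> E2)" "(B \<inter> E1) \<inter> (B \<inter> E2) = {}"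
    using B(1) assms(2,3) by auto
  then have "card B = card (B \<inter> E1) + card (B \<inter> E2)"
    using fin(1) by (metis card_Un_disjoint finite_Int)
  moreover have "card (B \<inter> E1) \<le> rig_rank d E1"
    using rows_indep_subset[OF B(2) _ fin(1)] by (intro card_le_rig_rank[OF fin(2)]) auto
  moreover have "card (B \<inter> E2) \<le> rig_rank d E2"
    using rows_indep_subset[OF B(2) _ fin(1)] by (intro card_le_rig_rank[OF fin(3)]) auto
  ultimately show thesis
    using that B assms(4) by simp
qed

abbreviation dual_configs ::
  "nat \<Rightarrow> ('v \<Rightarrow> nat \<Rightarrow> real) \<Rightarrow> 'v set set \<Rightarrow> ('v set \<Rightarrow> 'v \<Rightarrow> nat \<Rightarrow> real) \<Rightarrow> bool" where
  "dual_configs d x F W \<equiv> \<forall>b\<in>F. \<forall>b'\<in>F. edge_inner d b x (W b') = (if b = b' then 1 else 0)"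

lemma dual_config_extend:
  assumes "finite F" "a \<notin> F" and indep: "indep_functions (insert a F) (\<lambda>e. edge_inner d e x)"
    and W: "dual_configs d x F W"
  obtains Wa where "edge_inner d a x Wa = 1" "\<And>b. b \<in> F \<Longrightarrow> edge_inner d b x Wa = 0"
proof -
  \<comment> \<open>\<open>pr\<close> kills the functionals of \<open>F\<close>; independence keeps that of \<open>a\<close> alive on its range.\<close>
  define pr where "pr w = (\<lambda>v k. w v k - (\<Sum>b\<in>F. edge_inner d b x w * W b v k))" for w
  have pr_eq: "edge_inner d e x (pr w) = edge_inner d e x w - (\<Sum>b\<in>F. edge_inner d b x w * edge_inner d e x (W b))"
    for e w unfolding pr_def edge_inner_diff_right edge_inner_sum_right ..
  have pr_F: "edge_inner d b x (pr w) = 0" if "b \<in> F" for b w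
  proof -
    have "(\<Sum>b'\<in>F. edge_inner d b' x w * edge_inner d b x (W b'))
        = (\<Sum>b'\<in>F. if b' = b then edge_inner d b' x w else 0)"
      using W that by (intro sum.cong) auto
    then show ?thesis using that assms(1) by (simp add: pr_eq)
  qed
  have "\<exists>w. edge_inner d a x (pr w) \<noteq> 0"
  proof (rule ccontr)
    assume "\<nexists>w. edge_inner d a x (pr w) \<noteq> 0"
    define c where "c b = (if b = a then 1 else - edge_inner d a x (W b))" for b
    have "(\<Sum>b\<in>insert a F. c b * edge_inner d b x w) = edge_inner d a x (pr w)" for w
    proof -
      have "(\<Sum>b\<in>F. c b * edge_inner d b x w) = - (\<Sum>b\<in>F. edge_inner d b x w * edge_inner d a x (W b))"
        using assms(2) by (auto simp: c_def sum_negf[symmetric] mult.commute intro: sum.cong)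
      then show ?thesis using assms(1,2) by (simp add: pr_eq c_def)
    qed
    then have "c a = 0"
      using indep \<open>\<nexists>w. _\<close> unfolding indep_functions_def by simp
    then show False by (simp add: c_def)
  qed
  then obtain w where w: "edge_inner d a x (pr w) \<noteq> 0" by blast
  let ?t = "edge_inner d a x (pr w)"
  show thesis
  proof (rule that[of "\<lambda>v k. (1 / ?t) * pr w v k"])
    show "edge_inner d a x (\<lambda>v k. (1 / ?t) * pr w v k) = 1"
      unfolding edge_inner_scale_right using w by simp
    show "edge_inner d b x (\<lambda>v k. (1 / ?t) * pr w v k) = 0" if "b \<in> F" for b
      unfolding edge_inner_scale_right using pr_F[OF that] by simp
  qed
qed

lemma dual_configs_exist:
  assumes "finite F" "indep_functions F (\<lambda>e. edge_inner d e x)"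
  shows "\<exists>W. dual_configs d x F W"
  using assms
proof (induction F rule: finite_induct)
  case empty
  show ?case by simp
next
  case (insert a F)
  obtain W where W: "dual_configs d x F W"
    using insert indep_functions_subset[OF insert.prems, of F] by blast
  obtain Wa where Wa: "edge_inner d a x Wa = 1" "\<And>b. b \<in> F \<Longrightarrow> edge_inner d b x Wa = 0"
    using dual_config_extend[OF insert.hyps insert.prems W] by blast
  define W' where "W' b = (if b = a then Wa else (\<lambda>v k. W b v k - edge_inner d a x (W b) * Wa v k))" for b
  have "edge_inner d b x (W' b') = (if b = b' then 1 else 0)"
    if b: "b \<in> insert a F" and b': "b' \<in> insert a F" for b b'
  proof (cases "b' = a")
    case True
    then show ?thesis using b Wa insert.hyps(2) by (auto simp: W'_def)
  next
    case False
    then have "b' \<in> F" using b' by simp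
    then have "edge_inner d b x (W' b') = edge_inner d b x (W b') - edge_inner d a x (W b') * edge_inner d b x Wa"
      using False by (simp add: W'_def edge_inner_diff_right edge_inner_scale_right)
    then show ?thesis
      using b \<open>b' \<in> F\<close> False W Wa insert.hyps(2) by (cases "b = a") simp_all
  qed
  then show ?case by blast
qed

lemma rank_additive_dual_basis:
  assumes "finite V" "E \<subseteq> complete_edges V" "E1 \<union> E2 = E" "E1 \<inter> E2 = {}"
    and "rig_rank d E = rig_rank d E1 + rig_rank d E2"
  obtains p\<^sub>0 B W where "B \<subseteq> E" "card (B \<inter> E1) = rig_rank d E1" "card (B \<inter> E2) = rig_rank d E2"
    "dual_configs d p\<^sub>0 B W"
proof -
  have "finite E"
    using finite_subset[OF assms(2) finite_complete_edges[OF assms(1)]] .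
  then obtain p\<^sub>0 B where B: "B \<subseteq> E" "rows_indep d p\<^sub>0 B"
    "card (B \<inter> E1) = rig_rank d E1" "card (B \<inter> E2) = rig_rank d E2"
    by (rule rank_additive_basis[OF _ assms(3-5)]) blast
  have BV: "B \<subseteq> complete_edges V" using B(1) assms(2) by blast
  then have "finite B" using finite_subset[OF _ finite_complete_edges[OF assms(1)]] by blast
  moreover have "indep_functions B (\<lambda>e. edge_inner d e p\<^sub>0)"
    using B(2) rows_indep_iff_edge_inner[OF BV assms(1)] by blast
  ultimately obtain W where "dual_configs d p\<^sub>0 B W"
    using dual_configs_exist by blast
  then show thesis using that B(1,3,4) by blast
qed

section \<open>Fixed points of contractions\<close>

definition l1_norm :: "'b set \<Rightarrow> ('b \<Rightarrow> real) \<Rightarrow> real" where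
  "l1_norm B z = (\<Sum>b\<in>B. \<bar>z b\<bar>)"

lemma l1_norm_nonneg: "0 \<le> l1_norm B z"
  unfolding l1_norm_def by (simp add: sum_nonneg)

lemma l1_norm_le_diff: "l1_norm B x \<le> l1_norm B y + l1_norm B (\<lambda>b. x b - y b)"
  unfolding l1_norm_def sum.distrib[symmetric] by (rule sum_mono) linarith

lemma abs_le_l1_norm: "finite B \<Longrightarrow> b \<in> B \<Longrightarrow> \<bar>z b\<bar> \<le> l1_norm B z"
  unfolding l1_norm_def by (rule member_le_sum) auto

lemma geometric_iterates_converge:
  assumes "finite B" and step: "\<And>n. l1_norm B (\<lambda>b. z (Suc n) b - z n b) \<le> \<rho> * (1 / 2) ^ n"
  obtains L where "\<And>b. b \<in> B \<Longrightarrow> (\<lambda>n. z n b) \<longlonglongrightarrow> L b"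
proof -
  have "summable (\<lambda>n. z (Suc n) b - z n b)" if b: "b \<in> B" for b
  proof (rule summable_comparison_test)
    show "\<exists>N. \<forall>n\<ge>N. norm (z (Suc n) b - z n b) \<le> \<rho> * (1 / 2) ^ n"
      using order_trans[OF abs_le_l1_norm[OF assms(1) b] step] by auto
    show "summable (\<lambda>n. \<rho> * (1 / 2 :: real) ^ n)"
      by (intro summable_mult summable_geometric) simp
  qed
  then have "(\<lambda>n. z 0 b + (\<Sum>i<n. z (Suc i) b - z i b)) \<longlonglongrightarrow> z 0 b + (\<Sum>i. z (Suc i) b - z i b)"
    if "b \<in> B" for b
    using that by (intro tendsto_add tendsto_const summable_LIMSEQ)
  moreover have "(\<lambda>n. z 0 b + (\<Sum>i<n. z (Suc i) b - z i b)) = (\<lambda>n. z n b)" for b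
    using sum_lessThan_telescope[of "\<lambda>i. z i b"] by simp
  ultimately show thesis
    by (intro that[of "\<lambda>b. z 0 b + (\<Sum>i. z (Suc i) b - z i b)"]) metis
qed

lemma limit_is_fixpoint:
  fixes T :: "('b \<Rightarrow> real) \<Rightarrow> 'b \<Rightarrow> real"
  assumes "finite B" and L: "\<And>b. b \<in> B \<Longrightarrow> (\<lambda>n. zs n b) \<longlonglongrightarrow> L b"
    and zs_Suc: "\<And>n. zs (Suc n) = T (zs n)"
    and contr: "\<And>n. l1_norm B (\<lambda>b. T (zs n) b - T L b) \<le> l1_norm B (\<lambda>b. zs n b - L b) / 2"
    and "b \<in> B"
  shows "T L b = L b"
proof -
  have "(\<lambda>n. \<Sum>b\<in>B. \<bar>zs n b - L b\<bar>) \<longlonglongrightarrow> (\<Sum>b\<in>B. \<bar>L b - L b\<bar>)"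
    by (intro tendsto_sum tendsto_rabs tendsto_diff L tendsto_const)
  then have "(\<lambda>n. l1_norm B (\<lambda>b. zs n b - L b)) \<longlonglongrightarrow> 0"
    by (simp add: l1_norm_def)
  then have dist_L: "(\<lambda>n. l1_norm B (\<lambda>b. zs n b - L b) / 2) \<longlonglongrightarrow> 0"
    by (rule tendsto_divide_zero)
  have "\<bar>zs (Suc n) b - T L b\<bar> \<le> l1_norm B (\<lambda>b. zs n b - L b) / 2" for n
    using abs_le_l1_norm[OF assms(1) \<open>b \<in> B\<close>, of "\<lambda>b. T (zs n) b - T L b"] contr[of n]
    by (simp add: zs_Suc)
  then have "(\<lambda>n. zs (Suc n) b - T L b) \<longlonglongrightarrow> 0"
    by (intro Lim_null_comparison[OF _ dist_L] always_eventually) simp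
  then have "(\<lambda>n. zs (Suc n) b) \<longlonglongrightarrow> T L b"
    by (rule LIM_zero_cancel)
  then show ?thesis
    using LIMSEQ_unique LIMSEQ_Suc[OF L[OF \<open>b \<in> B\<close>]] by blast
qed

lemma contraction_fixpoint:
  fixes T :: "('b \<Rightarrow> real) \<Rightarrow> 'b \<Rightarrow> real"
  assumes "finite B" "0 \<le> \<rho>"
    and into: "\<And>z. l1_norm B z \<le> \<rho> \<Longrightarrow> l1_norm B (T z) \<le> \<rho>"
    and contr: "\<And>z z'. l1_norm B z \<le> \<rho> \<Longrightarrow> l1_norm B z' \<le> \<rho> \<Longrightarrow>
      l1_norm B (\<lambda>b. T z b - T z' b) \<le> l1_norm B (\<lambda>b. z b - z' b) / 2"
  obtains z where "l1_norm B z \<le> \<rho>" "\<And>b. b \<in> B \<Longrightarrow> T z b = z b"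
proof -
  define zs where "zs n = (T ^^ n) (\<lambda>_. 0)" for n
  have zs_Suc: "zs (Suc n) = T (zs n)" for n
    by (simp add: zs_def)
  have ball: "l1_norm B (zs n) \<le> \<rho>" for n
    by (induction n) (use assms(2) in \<open>simp_all add: zs_def l1_norm_def into[unfolded l1_norm_def]\<close>)
  have step: "l1_norm B (\<lambda>b. zs (Suc n) b - zs n b) \<le> \<rho> * (1 / 2) ^ n" for n
  proof (induction n)
    case 0
    show ?case using ball[of 1] by (simp add: zs_def)
  next
    case (Suc n)
    then show ?case
      using contr[OF ball[of "Suc n"] ball[of n]] by (simp add: zs_Suc[of "Suc n"] zs_Suc[of n])
  qed
  obtain L where L: "\<And>b. b \<in> B \<Longrightarrow> (\<lambda>n. zs n b) \<longlonglongrightarrow> L b"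
    using geometric_iterates_converge[OF assms(1) step] by blast
  have "(\<lambda>n. l1_norm B (zs n)) \<longlonglongrightarrow> l1_norm B L"
    unfolding l1_norm_def by (intro tendsto_sum tendsto_rabs L)
  then have L_ball: "l1_norm B L \<le> \<rho>"
    using ball by (intro LIMSEQ_le_const2) auto
  show thesis
  proof (rule that[OF L_ball])
    show "T L b = L b" if "b \<in> B" for b
      using limit_is_fixpoint[OF assms(1) L zs_Suc contr[OF ball L_ball] that] .
  qed
qed

section \<open>Perturbing a generic configuration\<close>

lemma zero_if_fixed_by_small_matrix:
  fixes c :: "'b \<Rightarrow> real"
  assumes "finite B" and fixed: "\<And>b'. b' \<in> B \<Longrightarrow> c b' = (\<Sum>b\<in>B. c b * A b b')"
    and small: "\<And>b'. b' \<in> B \<Longrightarrow> (\<Sum>b\<in>B. \<bar>A b b'\<bar>) < 1"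
  shows "\<forall>b\<in>B. c b = 0"
proof (cases "B = {}")
  case False
  \<comment> \<open>The largest coefficient in absolute value is bounded by a proper fraction of itself.\<close>
  define M where "M = Max ((\<lambda>b. \<bar>c b\<bar>) ` B)"
  have "M \<in> (\<lambda>b. \<bar>c b\<bar>) ` B"
    unfolding M_def using assms(1) False by (intro Max_in) auto
  then obtain b0 where b0: "b0 \<in> B" "\<bar>c b0\<bar> = M"
    by blast
  have le_M: "\<bar>c b\<bar> \<le> M" if "b \<in> B" for b
    unfolding M_def using assms(1) that by simp
  let ?s = "\<Sum>b\<in>B. \<bar>A b b0\<bar>"
  have "M = \<bar>\<Sum>b\<in>B. c b * A b b0\<bar>"
    using fixed[OF b0(1)] b0(2) by simp
  also have "\<dots> \<le> (\<Sum>b\<in>B. \<bar>c b\<bar> * \<bar>A b b0\<bar>)"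
    by (rule order_trans[OF sum_abs]) (simp add: abs_mult)
  also have "\<dots> \<le> (\<Sum>b\<in>B. M * \<bar>A b b0\<bar>)"
    by (intro sum_mono mult_right_mono le_M) auto
  also have "\<dots> = M * ?s"
    by (simp add: sum_distrib_left)
  finally have "M * (1 - ?s) \<le> 0"
    by (simp add: algebra_simps)
  moreover have "1 - ?s > 0"
    using small[OF b0(1)] by simp
  ultimately have "M \<le> 0"
    by (simp add: mult_le_0_iff)
  then show ?thesis using le_M by (meson abs_le_zero_iff order_trans)
qed simp

lemma indep_edge_inner_near_dual:
  assumes "finite B" and W: "dual_configs d p\<^sub>0 B W"
    and small: "\<And>b'. b' \<in> B \<Longrightarrow> (\<Sum>b\<in>B. \<bar>edge_inner d b (\<lambda>v k. m v k - p\<^sub>0 v k) (W b')\<bar>) < 1"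
  shows "indep_functions B (\<lambda>e. edge_inner d e m)"
  unfolding indep_functions_def
proof (intro allI impI)
  let ?D = "\<lambda>v k. m v k - p\<^sub>0 v k"
  fix c assume c: "(\<lambda>w. \<Sum>b\<in>B. c b * edge_inner d b m w) = (\<lambda>_. 0)"
  have fixed: "c b' = (\<Sum>b\<in>B. c b * - edge_inner d b ?D (W b'))" if b': "b' \<in> B" for b'
  proof -
    have "edge_inner d b m w = edge_inner d b p\<^sub>0 w + edge_inner d b ?D w" for b w
      by (simp add: edge_inner_diff_left)
    then have "0 = (\<Sum>b\<in>B. c b * edge_inner d b p\<^sub>0 (W b')) + (\<Sum>b\<in>B. c b * edge_inner d b ?D (W b'))"
      using fun_cong[OF c, of "W b'"] by (simp add: distrib_left sum.distrib)
    moreover have "(\<Sum>b\<in>B. c b * edge_inner d b p\<^sub>0 (W b')) = (\<Sum>b\<in>B. if b = b' then c b else 0)"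
      using W b' by (intro sum.cong) simp_all
    ultimately show ?thesis
      using b' assms(1) by (simp add: sum_negf)
  qed
  moreover have "(\<Sum>b\<in>B. \<bar>- edge_inner d b ?D (W b')\<bar>) < 1" if "b' \<in> B" for b'
    using small[OF that] by simp
  ultimately show "\<forall>b\<in>B. c b = 0"
    using zero_if_fixed_by_small_matrix[OF assms(1), where A = "\<lambda>b b'. - edge_inner d b ?D (W b')"]
    by blast
qed

lemma config_norms_bounded:
  assumes "finite B"
  obtains \<Omega> where "1 \<le> \<Omega>" "\<And>b. b \<in> B \<Longrightarrow> config_norm V d (W b) \<le> \<Omega>"
proof (rule that[of "1 + (\<Sum>b\<in>B. config_norm V d (W b))"])
  show "1 \<le> 1 + (\<Sum>b\<in>B. config_norm V d (W b))"
    by (simp add: sum_nonneg config_norm_nonneg)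
  show "config_norm V d (W b) \<le> 1 + (\<Sum>b\<in>B. config_norm V d (W b))" if "b \<in> B" for b
    using member_le_sum[of b B "\<lambda>b. config_norm V d (W b)"] assms that by (simp add: config_norm_nonneg)
qed

lemma indep_edge_inner_near:
  assumes "finite V" "B \<subseteq> complete_edges V" "dual_configs d p\<^sub>0 B W"
  obtains r where "r > 0"
    "\<And>m. config_norm V d (\<lambda>v k. m v k - p\<^sub>0 v k) < r \<Longrightarrow> indep_functions B (\<lambda>e. edge_inner d e m)"
proof -
  have fin: "finite B" using assms(1,2) finite_complete_edges finite_subset by blast
  obtain \<Omega> where \<Omega>: "1 \<le> \<Omega>" "\<And>b. b \<in> B \<Longrightarrow> config_norm V d (W b) \<le> \<Omega>"
    using config_norms_bounded[OF fin] by blast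
  define r where "r = 1 / ((card B + 1) * \<Omega>)"
  show thesis
  proof (rule that)
    show "r > 0" using \<Omega> by (simp add: r_def)
    fix m assume m: "config_norm V d (\<lambda>v k. m v k - p\<^sub>0 v k) < r"
    show "indep_functions B (\<lambda>e. edge_inner d e m)"
    proof (rule indep_edge_inner_near_dual[OF fin assms(3)])
      fix b' assume b': "b' \<in> B"
      have "\<bar>edge_inner d b (\<lambda>v k. m v k - p\<^sub>0 v k) (W b')\<bar> \<le> r * \<Omega>" if "b \<in> B" for b
        using edge_inner_bound[of b V d "\<lambda>v k. m v k - p\<^sub>0 v k" "W b'"] assms(1,2) that m \<Omega>(2)[OF b']
        by (smt (verit) config_norm_nonneg mult_mono subset_iff)
      then have "(\<Sum>b\<in>B. \<bar>edge_inner d b (\<lambda>v k. m v k - p\<^sub>0 v k) (W b')\<bar>) \<le> card B * (r * \<Omega>)"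
        using sum_mono[of B _ "\<lambda>_. r * \<Omega>"] by simp
      also have "\<dots> = card B / (card B + 1)"
        using \<Omega>(1) by (simp add: r_def)
      also have "\<dots> < 1"
        by simp
      finally show "(\<Sum>b\<in>B. \<bar>edge_inner d b (\<lambda>v k. m v k - p\<^sub>0 v k) (W b')\<bar>) < 1" .
    qed
  qed
qed

definition config_comb ::
  "'b set \<Rightarrow> ('b \<Rightarrow> 'v \<Rightarrow> nat \<Rightarrow> real) \<Rightarrow> ('b \<Rightarrow> real) \<Rightarrow> 'v \<Rightarrow> nat \<Rightarrow> real" where
  "config_comb B W z = (\<lambda>v k. \<Sum>b\<in>B. z b * W b v k)"

lemma config_norm_comb:
  assumes "\<And>b. b \<in> B \<Longrightarrow> config_norm V d (W b) \<le> \<Omega>"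
  shows "config_norm V d (config_comb B W z) \<le> \<Omega> * l1_norm B z"
proof -
  have "config_norm V d (config_comb B W z) \<le> (\<Sum>b\<in>B. \<bar>z b\<bar> * config_norm V d (W b))"
    unfolding config_comb_def by (rule config_norm_sum)
  also have "\<dots> \<le> (\<Sum>b\<in>B. \<bar>z b\<bar> * \<Omega>)"
    using assms by (intro sum_mono mult_left_mono) auto
  also have "\<dots> = \<Omega> * l1_norm B z"
    by (simp add: l1_norm_def sum_distrib_left mult.commute)
  finally show ?thesis .
qed

lemma config_comb_diff:
  "(\<lambda>v k. config_comb B W z v k - config_comb B W z' v k) = config_comb B W (\<lambda>b. z b - z' b)"
  unfolding config_comb_def by (simp add: fun_eq_iff sum_subtractf[symmetric] algebra_simps)

lemma config_comb_zero: "config_comb B W (\<lambda>_. 0) = (\<lambda>v k. 0)"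
  unfolding config_comb_def by simp

lemma edge_inner_dual_comb:
  assumes "finite B" "dual_configs d p\<^sub>0 B W" "b \<in> B"
  shows "edge_inner d b p\<^sub>0 (config_comb B W z) = z b"
proof -
  have "edge_inner d b p\<^sub>0 (config_comb B W z) = (\<Sum>b'\<in>B. if b' = b then z b' else 0)"
    unfolding config_comb_def edge_inner_sum_right using assms(2,3) by (intro sum.cong) simp_all
  then show ?thesis using assms(1,3) by simp
qed

lemma edge_inner_quadratic_lipschitz:
  assumes "e \<in> complete_edges V" "finite V"
  shows "\<bar>(edge_inner d e D u + edge_inner d e u u / 2) - (edge_inner d e D u' + edge_inner d e u' u' / 2)\<bar>
    \<le> config_norm V d (\<lambda>v k. u v k - u' v k)
        * (config_norm V d D + (config_norm V d u + config_norm V d u') / 2)"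
proof -
  let ?h = "\<lambda>v k. u v k - u' v k" and ?s = "\<lambda>v k. u v k + u' v k"
  have "(edge_inner d e D u + edge_inner d e u u / 2) - (edge_inner d e D u' + edge_inner d e u' u' / 2)
      = edge_inner d e D ?h + edge_inner d e ?h ?s / 2"
    using edge_inner_self_diff[of d e u u'] by (simp add: edge_inner_diff_right field_simps)
  then have "\<bar>(edge_inner d e D u + edge_inner d e u u / 2) - (edge_inner d e D u' + edge_inner d e u' u' / 2)\<bar>
      \<le> \<bar>edge_inner d e D ?h\<bar> + \<bar>edge_inner d e ?h ?s\<bar> / 2"
    using abs_triangle_ineq[of "edge_inner d e D ?h" "edge_inner d e ?h ?s / 2"] by simp
  also have "\<dots> \<le> config_norm V d D * config_norm V d ?h
      + config_norm V d ?h * (config_norm V d u + config_norm V d u') / 2"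
  proof -
    have "\<bar>edge_inner d e D ?h\<bar> \<le> config_norm V d D * config_norm V d ?h"
      by (rule edge_inner_bound[OF assms])
    moreover have "\<bar>edge_inner d e ?h ?s\<bar> \<le> config_norm V d ?h * (config_norm V d u + config_norm V d u')"
      using edge_inner_bound[OF assms, of d ?h ?s] config_norm_add[of V d u u']
      by (meson config_norm_nonneg mult_left_mono order_trans)
    ultimately show ?thesis by linarith
  qed
  also have "\<dots> = config_norm V d ?h * (config_norm V d D + (config_norm V d u + config_norm V d u') / 2)"
    by (simp add: algebra_simps)
  finally show ?thesis .
qed

(* Fixed-point form of the equations edge_inner d b (c + w) (c + w) = y b, b in B, for
   w = config_comb B W z: by duality edge_inner d b p0 w = z b, so the linear part of the
   equation in z is the identity and the rest is small near p0. *)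

definition correction_map ::
  "nat \<Rightarrow> 'v set set \<Rightarrow> ('v set \<Rightarrow> 'v \<Rightarrow> nat \<Rightarrow> real) \<Rightarrow> ('v \<Rightarrow> nat \<Rightarrow> real) \<Rightarrow> ('v \<Rightarrow> nat \<Rightarrow> real)
    \<Rightarrow> ('v set \<Rightarrow> real) \<Rightarrow> ('v set \<Rightarrow> real) \<Rightarrow> 'v set \<Rightarrow> real" where
  "correction_map d B W p\<^sub>0 c y z b =
     (y b - edge_inner d b c c) / 2
     - (edge_inner d b (\<lambda>v k. c v k - p\<^sub>0 v k) (config_comb B W z)
        + edge_inner d b (config_comb B W z) (config_comb B W z) / 2)"

lemma correction_map_fixpoint:
  assumes "finite B" "dual_configs d p\<^sub>0 B W" "b \<in> B" "correction_map d B W p\<^sub>0 c y z b = z b"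
  shows "edge_inner d b (\<lambda>v k. c v k + config_comb B W z v k) (\<lambda>v k. c v k + config_comb B W z v k) = y b"
proof -
  let ?w = "config_comb B W z"
  have "edge_inner d b c ?w = z b + edge_inner d b (\<lambda>v k. c v k - p\<^sub>0 v k) ?w"
    using edge_inner_dual_comb[OF assms(1-3)] by (simp add: edge_inner_diff_left)
  then show ?thesis
    using assms(4) unfolding correction_map_def edge_inner_self_add by (simp add: field_simps)
qed

lemma correction_map_zero:
  fixes \<delta> :: real
  assumes "\<And>b. b \<in> B \<Longrightarrow> \<bar>y b - edge_inner d b c c\<bar> \<le> \<delta>"
  shows "l1_norm B (correction_map d B W p\<^sub>0 c y (\<lambda>_. 0)) \<le> real (card B) * \<delta> / 2"
proof -
  have "l1_norm B (correction_map d B W p\<^sub>0 c y (\<lambda>_. 0)) = (\<Sum>b\<in>B. \<bar>y b - edge_inner d b c c\<bar> / 2)"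
    unfolding l1_norm_def correction_map_def config_comb_zero edge_inner_zero_right by simp
  also have "\<dots> \<le> (\<Sum>b\<in>B. \<delta> / 2)"
    using assms by (intro sum_mono) simp
  finally show ?thesis by simp
qed

lemma correction_map_lipschitz:
  fixes \<Omega> \<delta> \<rho> :: real
  assumes "finite V" "B \<subseteq> complete_edges V"
    and W: "\<And>b. b \<in> B \<Longrightarrow> config_norm V d (W b) \<le> \<Omega>" "0 \<le> \<Omega>"
    and c: "config_norm V d (\<lambda>v k. c v k - p\<^sub>0 v k) \<le> \<delta>"
    and z: "l1_norm B z \<le> \<rho>" "l1_norm B z' \<le> \<rho>"
  shows "l1_norm B (\<lambda>b. correction_map d B W p\<^sub>0 c y z b - correction_map d B W p\<^sub>0 c y z' b)
    \<le> real (card B) * (\<Omega> * (\<delta> + \<Omega> * \<rho>)) * l1_norm B (\<lambda>b. z b - z' b)"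
proof -
  let ?u = "config_comb B W" and ?h = "\<lambda>b. z b - z' b"
  have uh: "config_norm V d (\<lambda>v k. ?u z v k - ?u z' v k) \<le> \<Omega> * l1_norm B ?h"
    unfolding config_comb_diff using W(1) by (rule config_norm_comb)
  have "config_norm V d (?u x) \<le> \<Omega> * \<rho>" if "l1_norm B x \<le> \<rho>" for x
  proof -
    have "config_norm V d (?u x) \<le> \<Omega> * l1_norm B x"
      using W(1) by (rule config_norm_comb)
    then show ?thesis using mult_left_mono[OF that W(2)] by linarith
  qed
  from add_mono[OF this[OF z(1)] this[OF z(2)]]
  have uz: "(config_norm V d (?u z) + config_norm V d (?u z')) / 2 \<le> \<Omega> * \<rho>"
    by simp
  have "\<bar>correction_map d B W p\<^sub>0 c y z b - correction_map d B W p\<^sub>0 c y z' b\<bar>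
      \<le> \<Omega> * (\<delta> + \<Omega> * \<rho>) * l1_norm B ?h" if "b \<in> B" for b
  proof -
    have "\<bar>correction_map d B W p\<^sub>0 c y z b - correction_map d B W p\<^sub>0 c y z' b\<bar>
      \<le> config_norm V d (\<lambda>v k. ?u z v k - ?u z' v k)
          * (config_norm V d (\<lambda>v k. c v k - p\<^sub>0 v k) + (config_norm V d (?u z) + config_norm V d (?u z')) / 2)"
      using edge_inner_quadratic_lipschitz[of b V d "\<lambda>v k. c v k - p\<^sub>0 v k" "?u z" "?u z'"] assms(1,2) that
      unfolding correction_map_def by (auto simp: abs_minus_commute)
    also have "\<dots> \<le> (\<Omega> * l1_norm B ?h) * (\<delta> + \<Omega> * \<rho>)"
      using uh uz c W(2)
      by (intro mult_mono add_mono) (simp_all add: l1_norm_nonneg config_norm_nonneg add_nonneg_nonneg)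
    finally show ?thesis by (simp add: mult_ac)
  qed
  then have "l1_norm B (\<lambda>b. correction_map d B W p\<^sub>0 c y z b - correction_map d B W p\<^sub>0 c y z' b)
      \<le> (\<Sum>b\<in>B. \<Omega> * (\<delta> + \<Omega> * \<rho>) * l1_norm B ?h)"
    unfolding l1_norm_def[of B "\<lambda>b. _ b - _ b"] by (intro sum_mono) simp
  then show ?thesis by (simp add: mult_ac)
qed

lemma local_surjectivity_explicit:
  fixes \<Omega> \<delta> \<rho> :: real
  assumes "finite V" "B \<subseteq> complete_edges V" "dual_configs d p\<^sub>0 B W"
    and W: "\<And>b. b \<in> B \<Longrightarrow> config_norm V d (W b) \<le> \<Omega>" "0 \<le> \<Omega>" "0 \<le> \<rho>"
    and rate: "real (card B) * (\<Omega> * (\<delta> + \<Omega> * \<rho>)) \<le> 1 / 2" and start: "real (card B) * \<delta> \<le> \<rho>"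
    and c: "config_norm V d (\<lambda>v k. c v k - p\<^sub>0 v k) \<le> \<delta>"
    and y: "\<And>b. b \<in> B \<Longrightarrow> \<bar>y b - edge_inner d b c c\<bar> \<le> \<delta>"
  obtains w where "config_norm V d w \<le> \<Omega> * \<rho>"
    "\<And>b. b \<in> B \<Longrightarrow> edge_inner d b (\<lambda>v k. c v k + w v k) (\<lambda>v k. c v k + w v k) = y b"
proof -
  have fin: "finite B" using assms(1,2) finite_complete_edges finite_subset by blast
  let ?T = "correction_map d B W p\<^sub>0 c y"
  have contr: "l1_norm B (\<lambda>b. ?T z b - ?T z' b) \<le> l1_norm B (\<lambda>b. z b - z' b) / 2"
    if "l1_norm B z \<le> \<rho>" "l1_norm B z' \<le> \<rho>" for z z'
  proof -
    have "l1_norm B (\<lambda>b. ?T z b - ?T z' b)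
        \<le> real (card B) * (\<Omega> * (\<delta> + \<Omega> * \<rho>)) * l1_norm B (\<lambda>b. z b - z' b)"
      by (rule correction_map_lipschitz[OF assms(1,2)]) (use W c that in auto)
    then show ?thesis
      using mult_right_mono[OF rate l1_norm_nonneg, of B "\<lambda>b. z b - z' b"] by linarith
  qed
  have into: "l1_norm B (?T z) \<le> \<rho>" if "l1_norm B z \<le> \<rho>" for z
  proof -
    have "l1_norm B (?T z) \<le> l1_norm B (?T (\<lambda>_. 0)) + l1_norm B (\<lambda>b. ?T z b - ?T (\<lambda>_. 0) b)"
      by (rule l1_norm_le_diff)
    also have "\<dots> \<le> real (card B) * \<delta> / 2 + l1_norm B z / 2"
    proof -
      have "l1_norm B (?T (\<lambda>_. 0)) \<le> real (card B) * \<delta> / 2"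
        by (rule correction_map_zero) (rule y)
      then show ?thesis
        using contr[OF that, of "\<lambda>_. 0"] W(3) by (simp add: l1_norm_def)
    qed
    finally show ?thesis using that start by linarith
  qed
  obtain z where z: "l1_norm B z \<le> \<rho>" "\<And>b. b \<in> B \<Longrightarrow> ?T z b = z b"
    using contraction_fixpoint[OF fin W(3) into contr] by blast
  show thesis
  proof (rule that)
    show "config_norm V d (config_comb B W z) \<le> \<Omega> * \<rho>"
      using config_norm_comb[of B V d W \<Omega> z] W(1,2) mult_left_mono[OF z(1) W(2)] by auto
    show "edge_inner d b (\<lambda>v k. c v k + config_comb B W z v k) (\<lambda>v k. c v k + config_comb B W z v k) = y b"
      if "b \<in> B" for b
      using correction_map_fixpoint[OF fin assms(3) that z(2)[OF that]] .
  qed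
qed

lemma contraction_constants:
  fixes \<Omega> \<epsilon> :: real and n :: nat
  assumes "1 \<le> \<Omega>" "0 < \<epsilon>"
  obtains \<delta> \<rho> where "0 < \<delta>" "0 < \<rho>" "\<Omega> * \<rho> \<le> \<epsilon>"
    "real n * (\<Omega> * (\<delta> + \<Omega> * \<rho>)) \<le> 1 / 2" "real n * \<delta> \<le> \<rho>"
proof -
  define K where "K = real n + 1"
  define \<rho> where "\<rho> = min (\<epsilon> / \<Omega>) (1 / (4 * K * \<Omega>\<^sup>2))"
  define \<delta> where "\<delta> = min (1 / (4 * K * \<Omega>)) (\<rho> / K)"
  have K: "1 \<le> K" "real n \<le> K" by (simp_all add: K_def)
  have \<rho>: "0 < \<rho>" "\<Omega> * \<rho> \<le> \<epsilon>" "K * \<Omega>\<^sup>2 * \<rho> \<le> 1 / 4"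
    using assms K(1) by (auto simp: \<rho>_def min_def field_simps)
  have \<delta>: "0 < \<delta>" "K * \<Omega> * \<delta> \<le> 1 / 4" "K * \<delta> \<le> \<rho>"
    using assms(1) K(1) \<rho>(1) by (auto simp: \<delta>_def min_def field_simps)
  have "real n * (\<Omega> * \<delta>) \<le> K * (\<Omega> * \<delta>)" "real n * (\<Omega>\<^sup>2 * \<rho>) \<le> K * (\<Omega>\<^sup>2 * \<rho>)"
    using K(2) assms(1) \<delta>(1) \<rho>(1) by (intro mult_right_mono; simp)+
  moreover have "real n * (\<Omega> * (\<delta> + \<Omega> * \<rho>)) = real n * (\<Omega> * \<delta>) + real n * (\<Omega>\<^sup>2 * \<rho>)"
    "K * \<Omega> * \<delta> = K * (\<Omega> * \<delta>)" "K * \<Omega>\<^sup>2 * \<rho> = K * (\<Omega>\<^sup>2 * \<rho>)"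
    by (simp_all add: algebra_simps power2_eq_square)
  ultimately have "real n * (\<Omega> * (\<delta> + \<Omega> * \<rho>)) \<le> 1 / 2"
    using \<delta>(2) \<rho>(3) by linarith
  moreover have "real n * \<delta> \<le> \<rho>"
    using K(2) \<delta>(1,3) by (meson mult_right_mono less_imp_le order_trans)
  ultimately show thesis
    using that \<delta>(1) \<rho>(1,2) by blast
qed

lemma local_surjectivity:
  assumes "finite V" "B \<subseteq> complete_edges V" "dual_configs d p\<^sub>0 B W" "\<epsilon> > 0"
  obtains \<delta> where "\<delta> > 0"
    "\<And>c y. config_norm V d (\<lambda>v k. c v k - p\<^sub>0 v k) \<le> \<delta> \<Longrightarrow>
       (\<And>b. b \<in> B \<Longrightarrow> \<bar>y b - edge_inner d b c c\<bar> \<le> \<delta>) \<Longrightarrow>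
       \<exists>w. config_norm V d w \<le> \<epsilon>
         \<and> (\<forall>b\<in>B. edge_inner d b (\<lambda>v k. c v k + w v k) (\<lambda>v k. c v k + w v k) = y b)"
proof -
  have fin: "finite B" using assms(1,2) finite_complete_edges finite_subset by blast
  obtain \<Omega> where \<Omega>: "1 \<le> \<Omega>" "\<And>b. b \<in> B \<Longrightarrow> config_norm V d (W b) \<le> \<Omega>"
    using config_norms_bounded[OF fin] by blast
  obtain \<delta> \<rho> where \<delta>\<rho>: "0 < \<delta>" "0 < \<rho>" "\<Omega> * \<rho> \<le> \<epsilon>"
    and rate: "real (card B) * (\<Omega> * (\<delta> + \<Omega> * \<rho>)) \<le> 1 / 2" and start: "real (card B) * \<delta> \<le> \<rho>"
    using contraction_constants[OF \<Omega>(1) assms(4)] by blast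
  show thesis
  proof (rule that[OF \<delta>\<rho>(1)])
    fix c y
    assume c: "config_norm V d (\<lambda>v k. c v k - p\<^sub>0 v k) \<le> \<delta>"
      and y: "\<And>b. b \<in> B \<Longrightarrow> \<bar>y b - edge_inner d b c c\<bar> \<le> \<delta>"
    obtain w where "config_norm V d w \<le> \<Omega> * \<rho>"
      "\<And>b. b \<in> B \<Longrightarrow> edge_inner d b (\<lambda>v k. c v k + w v k) (\<lambda>v k. c v k + w v k) = y b"
      by (rule local_surjectivity_explicit[OF assms(1-3), where \<Omega> = \<Omega> and \<rho> = \<rho> and \<delta> = \<delta>])
        (use \<Omega> \<delta>\<rho> rate start c y in auto)
    then show "\<exists>w. config_norm V d w \<le> \<epsilon>
         \<and> (\<forall>b\<in>B. edge_inner d b (\<lambda>v k. c v k + w v k) (\<lambda>v k. c v k + w v k) = y b)"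
      using \<delta>\<rho>(3) by force
  qed
qed

lemma edge_sqlen_diff_bound:
  assumes "e \<in> complete_edges V" "finite V"
    and p: "config_norm V d (\<lambda>v k. p v k - p\<^sub>0 v k) \<le> \<eta>" and q: "config_norm V d (\<lambda>v k. q v k - p\<^sub>0 v k) \<le> \<eta>"
  shows "\<bar>edge_inner d e q q - edge_inner d e p p\<bar> \<le> 2 * \<eta> * (2 * config_norm V d p\<^sub>0 + 2 * \<eta>)"
proof -
  have "config_norm V d (\<lambda>v k. q v k - p v k) \<le> 2 * \<eta>"
    using config_norm_le_add[of "\<lambda>v k. q v k - p v k" "\<lambda>v k. q v k - p\<^sub>0 v k" "\<lambda>v k. p v k - p\<^sub>0 v k" V d] p q
    by (smt (verit) abs_triangle_ineq4)
  moreover have "config_norm V d (\<lambda>v k. q v k + p v k) \<le> 2 * config_norm V d p\<^sub>0 + 2 * \<eta>"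
  proof -
    have "config_norm V d (\<lambda>v k. q v k + p v k)
        \<le> config_norm V d (\<lambda>v k. 2 * p\<^sub>0 v k) + config_norm V d (\<lambda>v k. (q v k - p\<^sub>0 v k) + (p v k - p\<^sub>0 v k))"
      by (rule config_norm_le_add) (smt (verit) abs_triangle_ineq)
    moreover have "config_norm V d (\<lambda>v k. (q v k - p\<^sub>0 v k) + (p v k - p\<^sub>0 v k)) \<le> 2 * \<eta>"
      using config_norm_add[of V d "\<lambda>v k. q v k - p\<^sub>0 v k" "\<lambda>v k. p v k - p\<^sub>0 v k"] p q by linarith
    ultimately show ?thesis by (simp add: config_norm_scale)
  qed
  ultimately show ?thesis
    unfolding edge_inner_self_diff
    using edge_inner_bound[OF assms(1,2), of d "\<lambda>v k. q v k - p v k" "\<lambda>v k. q v k + p v k"]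
    by (smt (verit) config_norm_nonneg mult_mono)
qed

lemma edge_sqlen_continuous:
  assumes "finite V" "0 < \<delta>"
  obtains \<eta> where "0 < \<eta>" "\<eta> \<le> \<delta>"
    "\<And>e p q. e \<in> complete_edges V \<Longrightarrow> config_norm V d (\<lambda>v k. p v k - p\<^sub>0 v k) \<le> \<eta> \<Longrightarrow>
      config_norm V d (\<lambda>v k. q v k - p\<^sub>0 v k) \<le> \<eta> \<Longrightarrow> \<bar>edge_inner d e q q - edge_inner d e p p\<bar> \<le> \<delta>"
proof -
  define N where "N = config_norm V d p\<^sub>0"
  define \<eta> where "\<eta> = min 1 (\<delta> / (4 * N + 4))"
  have N: "0 \<le> N" by (simp add: N_def config_norm_nonneg)
  have \<eta>: "0 < \<eta>" "\<eta> \<le> 1" "\<eta> * (4 * N + 4) \<le> \<delta>"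
    using assms(2) N pos_le_divide_eq[of "4 * N + 4" \<eta> \<delta>] min.cobounded2[of 1 "\<delta> / (4 * N + 4)"]
    by (simp_all add: \<eta>_def)
  show thesis
  proof (rule that[OF \<eta>(1)])
    show "\<eta> \<le> \<delta>"
      using \<eta>(1,3) N by (smt (verit) mult_le_cancel_left1)
    fix e p q assume "e \<in> complete_edges V"
      and p: "config_norm V d (\<lambda>v k. p v k - p\<^sub>0 v k) \<le> \<eta>" and q: "config_norm V d (\<lambda>v k. q v k - p\<^sub>0 v k) \<le> \<eta>"
    then have "\<bar>edge_inner d e q q - edge_inner d e p p\<bar> \<le> 2 * \<eta> * (2 * N + 2 * \<eta>)"
      unfolding N_def by (intro edge_sqlen_diff_bound[OF _ assms(1) p q])
    also have "\<dots> \<le> \<eta> * (4 * N + 4)"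
      using \<eta>(1,2) mult_left_mono[OF \<eta>(2), of \<eta>] by (simp add: algebra_simps)
    finally show "\<bar>edge_inner d e q q - edge_inner d e p p\<bar> \<le> \<delta>"
      using \<eta>(3) by linarith
  qed
qed

(* Differences of squared lengths are linear in s - p, with coefficients taken at the midpoint:
   this lets a basis of rows at the midpoint carry equal lengths from the basis to all edges. *)

lemma edge_inner_self_diff_midpoint:
  "edge_inner d e s s - edge_inner d e p p
     = 2 * edge_inner d e (\<lambda>v k. (s v k + p v k) / 2) (\<lambda>v k. s v k - p v k)"
proof -
  have "edge_inner d e s s - edge_inner d e p p = edge_inner d e (\<lambda>v k. s v k + p v k) (\<lambda>v k. s v k - p v k)"
    using edge_inner_self_diff[of d e s p] edge_inner_commute by metis
  also have "(\<lambda>v k. s v k + p v k) = (\<lambda>v k. 2 * ((s v k + p v k) / 2))"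
    by (intro ext) simp
  finally show ?thesis
    by (simp only: edge_inner_scale_left)
qed

lemma edge_sqlen_eq_if_spanned:
  assumes span: "\<And>w. edge_inner d e m w = (\<Sum>b\<in>B. a b * edge_inner d b m w)"
    and m: "m = (\<lambda>v k. (s v k + p v k) / 2)"
    and eq: "\<And>b. b \<in> B \<Longrightarrow> edge_inner d b s s = edge_inner d b p p"
  shows "edge_inner d e s s = edge_inner d e p p"
proof -
  let ?h = "\<lambda>v k. s v k - p v k"
  have "edge_inner d e s s - edge_inner d e p p = 2 * (\<Sum>b\<in>B. a b * edge_inner d b m ?h)"
    unfolding edge_inner_self_diff_midpoint m[symmetric] span ..
  also have "\<dots> = (\<Sum>b\<in>B. a b * (edge_inner d b s s - edge_inner d b p p))"
    unfolding edge_inner_self_diff_midpoint m[symmetric] by (simp add: sum_distrib_left mult_ac)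
  also have "\<dots> = 0"
    using eq by simp
  finally show ?thesis by simp
qed

lemma edge_sqlen_eq_on_rank_basis:
  assumes "finite V" "F \<subseteq> complete_edges V" "B \<subseteq> F" "card B = rig_rank d F"
    and indep: "indep_functions B (\<lambda>e. edge_inner d e (\<lambda>v k. (s v k + p v k) / 2))"
    and eq: "\<And>b. b \<in> B \<Longrightarrow> edge_inner d b s s = edge_inner d b p p"
    and e: "e \<in> F"
  shows "edge_inner d e s s = edge_inner d e p p"
proof (cases "e \<in> B")
  case True
  then show ?thesis using eq by blast
next
  case False
  let ?m = "\<lambda>v k. (s v k + p v k) / 2"
  have fin: "finite F" "finite B"
    using assms(1-3) finite_complete_edges finite_subset by metis+
  have "\<not> indep_functions (insert e B) (\<lambda>e. edge_inner d e ?m)"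
  proof
    assume "indep_functions (insert e B) (\<lambda>e. edge_inner d e ?m)"
    then have "rows_indep d ?m (insert e B)"
      using rows_indep_iff_edge_inner[of "insert e B" V d ?m] assms(1-3) e by auto
    then have "card (insert e B) \<le> rig_rank d F"
      using card_le_rig_rank[OF fin(1)] assms(3) e by auto
    then show False using assms(4) fin(2) False by simp
  qed
  then obtain a where "\<And>w. edge_inner d e ?m w = (\<Sum>b\<in>B. a b * edge_inner d b ?m w)"
    using indep_functions_insert_span[OF fin(2) False indep] by blast
  then show ?thesis
    using edge_sqlen_eq_if_spanned eq by blast
qed

lemma edge_sqlen_eq_near:
  assumes "finite V" "F \<subseteq> complete_edges V" "finite B" "card (B \<inter> F) = rig_rank d F" "0 < r"
    and near: "\<And>m. config_norm V d (\<lambda>v k. m v k - p\<^sub>0 v k) < r \<Longrightarrow> indep_functions B (\<lambda>e. edge_inner d e m)"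
    and s: "config_norm V d (\<lambda>v k. s v k - p\<^sub>0 v k) \<le> 3 * r / 4"
    and x: "config_norm V d (\<lambda>v k. x v k - p\<^sub>0 v k) \<le> r / 4"
    and eq: "\<And>b. b \<in> B \<inter> F \<Longrightarrow> edge_inner d b s s = edge_inner d b x x"
    and "e \<in> F"
  shows "edge_inner d e s s = edge_inner d e x x"
proof (rule edge_sqlen_eq_on_rank_basis[OF assms(1,2) _ assms(4) _ eq \<open>e \<in> F\<close>])
  have "config_norm V d (\<lambda>v k. (s v k + x v k) / 2 - p\<^sub>0 v k) < r"
  proof (rule order_le_less_trans[OF config_norm_midpoint])
    show "(config_norm V d (\<lambda>v k. s v k - p\<^sub>0 v k) + config_norm V d (\<lambda>v k. x v k - p\<^sub>0 v k)) / 2 < r"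
      using s x \<open>0 < r\<close> by argo
  qed
  then have "indep_functions B (\<lambda>e. edge_inner d e (\<lambda>v k. (s v k + x v k) / 2))"
    by (rule near)
  then show "indep_functions (B \<inter> F) (\<lambda>e. edge_inner d e (\<lambda>v k. (s v k + x v k) / 2))"
    by (rule indep_functions_subset) (simp_all add: assms(3))
qed blast

lemma edge_lengths_split_near:
  assumes "finite V" "E \<subseteq> complete_edges V" "E1 \<union> E2 = E" "E1 \<inter> E2 = {}" "B \<subseteq> E"
    and card: "card (B \<inter> E1) = rig_rank d E1" "card (B \<inter> E2) = rig_rank d E2"
    and "0 < r"
    and near: "\<And>m. config_norm V d (\<lambda>v k. m v k - p\<^sub>0 v k) < r \<Longrightarrow> indep_functions B (\<lambda>e. edge_inner d e m)"
    and surj: "\<And>y. (\<And>b. b \<in> B \<Longrightarrow> \<bar>y b - edge_inner d b p p\<bar> \<le> \<delta>) \<Longrightarrow>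
      \<exists>w. config_norm V d w \<le> r / 2
        \<and> (\<forall>b\<in>B. edge_inner d b (\<lambda>v k. p v k + w v k) (\<lambda>v k. p v k + w v k) = y b)"
    and close: "\<And>b. b \<in> B \<Longrightarrow> \<bar>edge_inner d b q q - edge_inner d b p p\<bar> \<le> \<delta>" "0 \<le> \<delta>"
    and p: "config_norm V d (\<lambda>v k. p v k - p\<^sub>0 v k) \<le> r / 4"
    and q: "config_norm V d (\<lambda>v k. q v k - p\<^sub>0 v k) \<le> r / 4"
  obtains s where "\<And>e. e \<in> E1 \<Longrightarrow> edge_inner d e s s = edge_inner d e p p"
    "\<And>e. e \<in> E2 \<Longrightarrow> edge_inner d e s s = edge_inner d e q q"
proof -
  define y where "y b = (if b \<in> E1 then edge_inner d b p p else edge_inner d b q q)" for b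
  have "\<bar>y b - edge_inner d b p p\<bar> \<le> \<delta>" if "b \<in> B" for b
    using close that by (simp add: y_def)
  then obtain w where w: "config_norm V d w \<le> r / 2"
    "\<forall>b\<in>B. edge_inner d b (\<lambda>v k. p v k + w v k) (\<lambda>v k. p v k + w v k) = y b"
    using surj by blast
  define s where "s = (\<lambda>v k. p v k + w v k)"
  have "config_norm V d (\<lambda>v k. s v k - p\<^sub>0 v k) \<le> config_norm V d (\<lambda>v k. p v k - p\<^sub>0 v k) + config_norm V d w"
  proof (rule config_norm_le_add)
    fix v k
    show "\<bar>s v k - p\<^sub>0 v k\<bar> \<le> \<bar>p v k - p\<^sub>0 v k\<bar> + \<bar>w v k\<bar>"
      using abs_triangle_ineq[of "p v k - p\<^sub>0 v k" "w v k"] by (simp add: s_def algebra_simps)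
  qed
  then have s: "config_norm V d (\<lambda>v k. s v k - p\<^sub>0 v k) \<le> 3 * r / 4"
    using p w(1) by linarith
  have E: "E1 \<subseteq> complete_edges V" "E2 \<subseteq> complete_edges V" "finite B"
    using assms(1-3,5) finite_subset[OF _ finite_complete_edges[OF assms(1)]] by auto
  show thesis
  proof (rule that)
    show "edge_inner d e s s = edge_inner d e p p" if "e \<in> E1" for e
      by (rule edge_sqlen_eq_near[OF assms(1) E(1,3) card(1) \<open>0 < r\<close> near s p _ that])
        (use w(2) in \<open>auto simp: s_def y_def\<close>)
    show "edge_inner d e s s = edge_inner d e q q" if "e \<in> E2" for e
      by (rule edge_sqlen_eq_near[OF assms(1) E(2,3) card(2) \<open>0 < r\<close> near s q _ that])
        (use w(2) assms(4) in \<open>auto simp: s_def y_def\<close>)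
  qed
qed

lemma edge_lengths_split_locally:
  assumes "finite V" "E \<subseteq> complete_edges V" "E1 \<union> E2 = E" "E1 \<inter> E2 = {}"
    and "rig_rank d E = rig_rank d E1 + rig_rank d E2"
  obtains p\<^sub>0 \<eta> where "\<eta> > 0"
    "\<And>p q. config_norm V d (\<lambda>v k. p v k - p\<^sub>0 v k) \<le> \<eta> \<Longrightarrow> config_norm V d (\<lambda>v k. q v k - p\<^sub>0 v k) \<le> \<eta> \<Longrightarrow>
       \<exists>s. (\<forall>e\<in>E1. edge_inner d e s s = edge_inner d e p p) \<and> (\<forall>e\<in>E2. edge_inner d e s s = edge_inner d e q q)"
proof -
  obtain p\<^sub>0 B W where B: "B \<subseteq> E" "card (B \<inter> E1) = rig_rank d E1" "card (B \<inter> E2) = rig_rank d E2"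
    and W: "dual_configs d p\<^sub>0 B W"
    by (rule rank_additive_dual_basis[OF assms]) blast
  have BV: "B \<subseteq> complete_edges V" using B(1) assms(2) by blast
  obtain r where r: "r > 0"
    "\<And>m. config_norm V d (\<lambda>v k. m v k - p\<^sub>0 v k) < r \<Longrightarrow> indep_functions B (\<lambda>e. edge_inner d e m)"
    by (rule indep_edge_inner_near[OF assms(1) BV W]) blast
  obtain \<delta> where \<delta>: "\<delta> > 0"
    "\<And>c y. config_norm V d (\<lambda>v k. c v k - p\<^sub>0 v k) \<le> \<delta> \<Longrightarrow>
       (\<And>b. b \<in> B \<Longrightarrow> \<bar>y b - edge_inner d b c c\<bar> \<le> \<delta>) \<Longrightarrow>
       \<exists>w. config_norm V d w \<le> r / 2
         \<and> (\<forall>b\<in>B. edge_inner d b (\<lambda>v k. c v k + w v k) (\<lambda>v k. c v k + w v k) = y b)"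
    by (rule local_surjectivity[OF assms(1) BV W, of "r / 2"]) (use r(1) in auto)
  obtain \<eta> where \<eta>: "0 < \<eta>" "\<eta> \<le> \<delta>" and close:
    "\<And>e p q. e \<in> complete_edges V \<Longrightarrow> config_norm V d (\<lambda>v k. p v k - p\<^sub>0 v k) \<le> \<eta> \<Longrightarrow>
      config_norm V d (\<lambda>v k. q v k - p\<^sub>0 v k) \<le> \<eta> \<Longrightarrow> \<bar>edge_inner d e q q - edge_inner d e p p\<bar> \<le> \<delta>"
    by (rule edge_sqlen_continuous[where p\<^sub>0 = p\<^sub>0 and d = d, OF assms(1) \<delta>(1)]) blast
  show thesis
  proof (rule that[of "min \<eta> (r / 4)"])
    show "0 < min \<eta> (r / 4)" using \<eta>(1) r(1) by simp
    fix p q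
    assume p: "config_norm V d (\<lambda>v k. p v k - p\<^sub>0 v k) \<le> min \<eta> (r / 4)"
      and q: "config_norm V d (\<lambda>v k. q v k - p\<^sub>0 v k) \<le> min \<eta> (r / 4)"
    obtain s where "\<And>e. e \<in> E1 \<Longrightarrow> edge_inner d e s s = edge_inner d e p p"
      "\<And>e. e \<in> E2 \<Longrightarrow> edge_inner d e s s = edge_inner d e q q"
      by (rule edge_lengths_split_near[where \<delta> = \<delta> and p = p and q = q, OF assms(1-4) B r])
        (use \<delta> p q \<eta> close BV in auto)
    then show "\<exists>s. (\<forall>e\<in>E1. edge_inner d e s s = edge_inner d e p p) \<and> (\<forall>e\<in>E2. edge_inner d e s s = edge_inner d e q q)"
      by blast
  qed
qed

section \<open>Measurement varieties\<close>

lemma meas_map_cong: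
  assumes "F \<subseteq> complete_edges V" "\<And>v k. v \<in> V \<Longrightarrow> k < d \<Longrightarrow> p v k = q v k"
  shows "meas_map d F p = meas_map d F q"
proof
  fix e
  show "meas_map d F p e = meas_map d F q e"
  proof (cases "e \<in> F")
    case True
    then obtain u v where uv: "ends e = (u, v)" "u \<in> V" "v \<in> V"
      using assms(1) by (blast elim: complete_edgesE)
    have "(\<Sum>k<d. (p u k - p v k)\<^sup>2) = (\<Sum>k<d. (q u k - q v k)\<^sup>2)"
      using assms(2) uv(2,3) by (intro sum.cong) auto
    then show ?thesis
      using True uv(1) by (simp add: meas_map_def)
  qed (simp add: meas_map_def)
qed

lemma meas_map_in_image:
  assumes "F \<subseteq> complete_edges V"
  shows "meas_map d F p \<in> meas_map d F ` config_space d V"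
proof (rule image_eqI)
  let ?p = "\<lambda>v k. if v \<in> V \<and> k < d then p v k else 0"
  show "?p \<in> config_space d V" by (auto simp: config_space_def)
  show "meas_map d F p = meas_map d F ?p" by (rule meas_map_cong[OF assms]) simp
qed

lemma restrict_to_meas_map: "F \<subseteq> E \<Longrightarrow> restrict_to F (meas_map d E p) = meas_map d F p"
  unfolding restrict_to_def meas_map_def by (rule ext) auto

lemma meas_map_of_real:
  "meas_map d F (\<lambda>v k. complex_of_real (x v k))
     = (\<lambda>e. if e \<in> F then complex_of_real (edge_inner d e x x) else 0)"
  unfolding meas_map_def edge_inner_def by (auto simp: split_beta power2_eq_square)

lemma polyfun_meas_map:
  assumes "F \<subseteq> complete_edges V" "e \<in> F" "\<And>v k. v \<in> V \<Longrightarrow> k < d \<Longrightarrow> \<iota> v k \<in> X"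
  shows "(\<lambda>P. meas_map d F (\<lambda>v k. P (\<iota> v k)) e) \<in> polyfun X"
proof -
  obtain u v where e: "ends e = (u, v)" "u \<in> V" "v \<in> V"
    using assms(1,2) by (blast elim: complete_edgesE)
  have "(\<lambda>P. \<Sum>k<d. (P (\<iota> u k) - P (\<iota> v k))\<^sup>2) \<in> polyfun X"
    using e assms(3) by (intro polyfun_sum polyfun_power2 polyfun_diff polyfun.pf_var) auto
  then show ?thesis
    using assms(2) e by (simp add: meas_map_def)
qed

lemma meas_variety_restrict:
  assumes "E \<subseteq> complete_edges V" "F \<subseteq> E" "x \<in> meas_variety d V E"
  shows "restrict_to F x \<in> meas_variety d (\<Union>F) F"
  unfolding meas_variety_def
proof (rule zariski_closure_restrict_to[OF assms(2) _ assms(3)[unfolded meas_variety_def]])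
  have "F \<subseteq> complete_edges (\<Union>F)"
    using assms(1,2) complete_edges_Union by blast
  then show "restrict_to F ` meas_map d E ` config_space d V \<subseteq> meas_map d F ` config_space d (\<Union>F)"
    using assms(2) by (auto simp: restrict_to_meas_map intro: meas_map_in_image)
qed

lemma polyfun_config_zero_if_zero_on_box:
  fixes g :: "('v \<Rightarrow> nat \<Rightarrow> complex) \<Rightarrow> complex"
  assumes "finite V" and g: "(\<lambda>Q. g (\<lambda>v k. Q (v, k))) \<in> polyfun (V \<times> {..<d})" and "\<eta> > 0"
    and zero: "\<And>p. (\<And>v k. \<bar>p v k - p\<^sub>0 v k\<bar> \<le> \<eta>) \<Longrightarrow> g (\<lambda>v k. complex_of_real (p v k)) = 0"
  shows "g P = 0"
proof -
  let ?S = "\<lambda>(v, k). complex_of_real ` {p\<^sub>0 v k - \<eta> .. p\<^sub>0 v k + \<eta>}"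
  have "(\<lambda>Q. g (\<lambda>v k. Q (v, k))) (\<lambda>(v, k). P v k) = 0"
  proof (rule polyfun_zero_if_zero_on_grid[OF _ g])
    show "finite (V \<times> {..<d})" using assms(1) by simp
    show "infinite (?S i)" for i
      using \<open>\<eta> > 0\<close> by (auto simp: split_beta finite_image_iff inj_on_def)
    fix Q assume Q: "\<And>i. i \<in> V \<times> {..<d} \<Longrightarrow> Q i \<in> ?S i"
    define p where "p v k = (if (v, k) \<in> V \<times> {..<d} then Re (Q (v, k)) else p\<^sub>0 v k)" for v k
    have "\<bar>p v k - p\<^sub>0 v k\<bar> \<le> \<eta>" for v k
      using Q[of "(v, k)"] \<open>\<eta> > 0\<close> by (auto simp: p_def abs_le_iff)
    moreover have "g (\<lambda>v k. Q (v, k)) = g (\<lambda>v k. complex_of_real (p v k))"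
      using polyfun_cong[OF g, of Q "\<lambda>(v, k). complex_of_real (p v k)"] Q by (force simp: p_def)
    ultimately show "g (\<lambda>v k. Q (v, k)) = 0" using zero by simp
  qed
  then show ?thesis by simp
qed

lemma glued_real_measurements_in_image:
  assumes "finite V" "E \<subseteq> complete_edges V" "E1 \<union> E2 = E" "E1 \<inter> E2 = {}"
    and "rig_rank d E = rig_rank d E1 + rig_rank d E2"
  obtains p\<^sub>0 \<eta> where "\<eta> > 0"
    "\<And>p q. (\<And>v k. \<bar>p v k - p\<^sub>0 v k\<bar> \<le> \<eta> \<and> \<bar>q v k - p\<^sub>0 v k\<bar> \<le> \<eta>) \<Longrightarrow>
       glue E1 (meas_map d E1 (\<lambda>v k. complex_of_real (p v k))) (meas_map d E2 (\<lambda>v k. complex_of_real (q v k)))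
         \<in> meas_map d E ` config_space d V"
proof -
  obtain p\<^sub>0 \<eta> where \<eta>: "\<eta> > 0" and split:
    "\<And>p q. config_norm V d (\<lambda>v k. p v k - p\<^sub>0 v k) \<le> \<eta> \<Longrightarrow> config_norm V d (\<lambda>v k. q v k - p\<^sub>0 v k) \<le> \<eta> \<Longrightarrow>
       \<exists>s. (\<forall>e\<in>E1. edge_inner d e s s = edge_inner d e p p) \<and> (\<forall>e\<in>E2. edge_inner d e s s = edge_inner d e q q)"
    by (rule edge_lengths_split_locally[OF assms]) blast
  define N where "N = real (card (V \<times> {..<d})) + 1"
  have box_norm: "config_norm V d (\<lambda>v k. x v k - p\<^sub>0 v k) \<le> \<eta>"
    if "\<And>v k. \<bar>x v k - p\<^sub>0 v k\<bar> \<le> \<eta> / N" for x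
  proof -
    have "config_norm V d (\<lambda>v k. x v k - p\<^sub>0 v k) \<le> real (card (V \<times> {..<d})) * (\<eta> / N)"
      by (rule config_norm_le_box) (rule that)
    also have "\<dots> \<le> \<eta>"
      using \<eta> by (simp add: N_def field_simps)
    finally show ?thesis .
  qed
  show thesis
  proof (rule that[of "\<eta> / N"])
    show "\<eta> / N > 0" using \<eta> by (simp add: N_def)
    fix p q assume box: "\<And>v k. \<bar>p v k - p\<^sub>0 v k\<bar> \<le> \<eta> / N \<and> \<bar>q v k - p\<^sub>0 v k\<bar> \<le> \<eta> / N"
    obtain s where s: "\<forall>e\<in>E1. edge_inner d e s s = edge_inner d e p p" "\<forall>e\<in>E2. edge_inner d e s s = edge_inner d e q q"
      using split[OF box_norm box_norm] box by blast
    have "glue E1 (meas_map d E1 (\<lambda>v k. complex_of_real (p v k))) (meas_map d E2 (\<lambda>v k. complex_of_real (q v k)))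
        = meas_map d E (\<lambda>v k. complex_of_real (s v k))"
      using s assms(3,4) by (auto simp: glue_def meas_map_of_real fun_eq_iff)
    then show "glue E1 (meas_map d E1 (\<lambda>v k. complex_of_real (p v k))) (meas_map d E2 (\<lambda>v k. complex_of_real (q v k)))
        \<in> meas_map d E ` config_space d V"
      using meas_map_in_image[OF assms(2)] by simp
  qed
qed

lemma polyfun_zero_on_glued_measurements:
  assumes "finite V" "E1 \<subseteq> complete_edges V" "E2 \<subseteq> complete_edges V"
    and f: "f \<in> polyfun (E1 \<union> E2)" and "\<eta> > 0"
    and zero: "\<And>p q. (\<And>v k. \<bar>p v k - p\<^sub>0 v k\<bar> \<le> \<eta> \<and> \<bar>q v k - p\<^sub>0 v k\<bar> \<le> \<eta>) \<Longrightarrow>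
      f (glue E1 (meas_map d E1 (\<lambda>v k. complex_of_real (p v k))) (meas_map d E2 (\<lambda>v k. complex_of_real (q v k)))) = 0"
  shows "f (glue E1 (meas_map d E1 P) (meas_map d E2 Q)) = 0"
proof -
  have left: "(\<lambda>R. f (glue E1 (meas_map d E1 (\<lambda>v k. R (v, k))) b)) \<in> polyfun (V \<times> {..<d})" for b
    by (rule polyfun_glue_compose[OF f]) (auto intro: polyfun_meas_map[OF assms(2)] polyfun.pf_const)
  have right: "(\<lambda>R. f (glue E1 a (meas_map d E2 (\<lambda>v k. R (v, k))))) \<in> polyfun (V \<times> {..<d})" for a
    by (rule polyfun_glue_compose[OF f]) (auto intro: polyfun_meas_map[OF assms(3)] polyfun.pf_const)
  have "f (glue E1 (meas_map d E1 P) (meas_map d E2 (\<lambda>v k. complex_of_real (q v k)))) = 0"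
    if "\<And>v k. \<bar>q v k - p\<^sub>0 v k\<bar> \<le> \<eta>" for q
    by (rule polyfun_config_zero_if_zero_on_box[where p\<^sub>0 = p\<^sub>0, OF assms(1) left \<open>\<eta> > 0\<close>])
      (use zero that in auto)
  then show ?thesis
    by (rule polyfun_config_zero_if_zero_on_box[where p\<^sub>0 = p\<^sub>0, OF assms(1) right \<open>\<eta> > 0\<close>])
qed

lemma meas_variety_glue:
  assumes "finite V" "E \<subseteq> complete_edges V" "E1 \<union> E2 = E" "E1 \<inter> E2 = {}"
    and "rig_rank d E = rig_rank d E1 + rig_rank d E2"
    and x1: "x1 \<in> meas_variety d (\<Union>E1) E1" and x2: "x2 \<in> meas_variety d (\<Union>E2) E2"
  shows "glue E1 x1 x2 \<in> meas_variety d V E"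
  unfolding meas_variety_def
proof (rule zariski_closureI)
  show "glue E1 x1 x2 \<in> cspace E"
    using x1 x2 assms(3) by (auto simp: meas_variety_def zariski_closure_def cspace_def glue_def)
  fix f assume f: "f \<in> polyfun E" and zero: "\<forall>y\<in>meas_map d E ` config_space d V. f y = 0"
  obtain p\<^sub>0 \<eta> where \<eta>: "\<eta> > 0" and image:
    "\<And>p q. (\<And>v k. \<bar>p v k - p\<^sub>0 v k\<bar> \<le> \<eta> \<and> \<bar>q v k - p\<^sub>0 v k\<bar> \<le> \<eta>) \<Longrightarrow>
       glue E1 (meas_map d E1 (\<lambda>v k. complex_of_real (p v k))) (meas_map d E2 (\<lambda>v k. complex_of_real (q v k)))
         \<in> meas_map d E ` config_space d V"
    by (rule glued_real_measurements_in_image[OF assms(1-5)]) blast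
  have E12: "E1 \<subseteq> complete_edges V" "E2 \<subseteq> complete_edges V" "f \<in> polyfun (E1 \<union> E2)"
    using assms(2,3) f by auto
  have zero_real: "f (glue E1 (meas_map d E1 (\<lambda>v k. complex_of_real (p v k)))
      (meas_map d E2 (\<lambda>v k. complex_of_real (q v k)))) = 0"
    if "\<And>v k. \<bar>p v k - p\<^sub>0 v k\<bar> \<le> \<eta> \<and> \<bar>q v k - p\<^sub>0 v k\<bar> \<le> \<eta>" for p q
    using zero image[OF that] by blast
  have glued: "f (glue E1 (meas_map d E1 P) (meas_map d E2 Q)) = 0" for P Q
    by (rule polyfun_zero_on_glued_measurements[OF assms(1) E12 \<eta> zero_real])
  show "f (glue E1 x1 x2) = 0"
  proof (rule zariski_closure_glue[OF E12(3) _ x1[unfolded meas_variety_def] x2[unfolded meas_variety_def]])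
    fix a b
    assume "a \<in> meas_map d E1 ` config_space d (\<Union>E1)" "b \<in> meas_map d E2 ` config_space d (\<Union>E2)"
    then show "f (glue E1 a b) = 0" using glued by auto
  qed
qed

theorem lemma3p1:
  fixes d :: nat and V :: "'v set" and E E1 E2 :: "'v set set"
  assumes "d \<ge> 1"
    and "finite V"
    and "E \<subseteq> {{u, v} | u v. u \<in> V \<and> v \<in> V \<and> u \<noteq> v}"
    and "E1 \<union> E2 = E" and "E1 \<inter> E2 = {}" and "E1 \<noteq> {}" and "E2 \<noteq> {}"
    and "rig_rank d E = rig_rank d E1 + rig_rank d E2"
  shows "meas_variety d V E =
    {x \<in> cspace E. restrict_to E1 x \<in> meas_variety d (\<Union>E1) E1
                 \<and> restrict_to E2 x \<in> meas_variety d (\<Union>E2) E2}"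
proof -
  have E: "E \<subseteq> complete_edges V"
    using assms(3) by (simp add: complete_edges_def)
  show ?thesis
  proof (intro equalityI subsetI CollectI conjI)
    fix x assume x: "x \<in> meas_variety d V E"
    then show "x \<in> cspace E"
      by (simp add: meas_variety_def zariski_closure_def)
    show "restrict_to E1 x \<in> meas_variety d (\<Union>E1) E1" "restrict_to E2 x \<in> meas_variety d (\<Union>E2) E2"
      using meas_variety_restrict[OF E _ x] assms(4) by auto
  next
    fix x
    assume "x \<in> {x \<in> cspace E. restrict_to E1 x \<in> meas_variety d (\<Union>E1) E1
                                \<and> restrict_to E2 x \<in> meas_variety d (\<Union>E2) E2}"
    then have x: "x \<in> cspace E" "restrict_to E1 x \<in> meas_variety d (\<Union>E1) E1"
      "restrict_to E2 x \<in> meas_variety d (\<Union>E2) E2"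
      by auto
    have "x = glue E1 (restrict_to E1 x) (restrict_to E2 x)"
      using x(1) assms(4) by (auto simp: glue_def restrict_to_def cspace_def fun_eq_iff)
    also have "\<dots> \<in> meas_variety d V E"
      by (rule meas_variety_glue[OF assms(2) E assms(4,5,8) x(2,3)])
    finally show "x \<in> meas_variety d V E" .
  qed
qed

end
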